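(* Let $X$ be a Hilbert space and let $T:X\rightrightarrows X$ be a proper set-valued mapping whose graph $\operatorname{gph}T$ is closed in the norm topology of $X\times X$. Then the following are equivalent: (i) $T$ is maximal monotone on $X$; (ii) $T$ is hypomonotone on $X$ and for every $(u,v)\in\operatorname{gph}T$ one has $\langle z,w\rangle\ge 0$ whenever $w\in X$ and $z\in\widehat D^*T(u,v)(w)$.
   Context: $X$ is a real Hilbert space identified with its dual, with inner product $\langle\cdot,\cdot\rangle$ and norm $\|\cdot\|$. A set-valued mapping $T:X\rightrightarrows X$ has domain $\operatorname{dom}T=\{u: T(u)\neq\emptyset\}$ and graph $\operatorname{gph}T=\{(u,v): v\in T(u)\}$; $T$ is proper if $\operatorname{dom}T\neq\emptyset$. $T$ is monotone if $\langle v_1-v_2,u_1-u_2\rangle\ge0$ for all $(u_1,v_1),(u_2,v_2)\in\operatorname{gph}T$; maximal monotone if it is monotone and $\operatorname{gph}T=\operatorname{gph}S$ for every monotone $S$ with $\operatorname{gph}T\subset\operatorname{gph}S$. $T$ is hypomonotone on $X$ if there is $r>0$ with $\langle v_1-v_2,u_1-u_2\rangle\ge -r\|u_1-u_2\|^2$ for all $(u_1,v_1),(u_2,v_2)\in\operatorname{gph}T$. For a set $\Omega\subset X\times X$ and $\bar p\in\Omega$, the regular (Fréchet) normal cone is $\widehat N(\bar p;\Omega)=\{q: \limsup_{p\to\bar p,\,p\in\Omega}\frac{\langle q,p-\bar p\rangle}{\|p-\bar p\|}\le 0\}$. The regular coderivative of $T$ at $(u,v)\in\operatorname{gph}T$ is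 $\widehat D^*T(u,v)(w)=\{z\in X: (z,-w)\in\widehat N((u,v);\operatorname{gph}T)\}$ for $w\in X$. *)

theory Defs
  imports "HOL-Analysis.Analysis"
begin

text \<open>The product X \<times> X carries the library's inner product
  inner (a,b) (c,d) = inner a c + inner b d and its induced (product) norm.\<close>

definition gph :: "('a \<Rightarrow> 'b set) \<Rightarrow> ('a \<times> 'b) set" where
  "gph T = {(u, v). v \<in> T u}"

definition dom_sv :: "('a \<Rightarrow> 'b set) \<Rightarrow> 'a set" where
  "dom_sv T = {u. T u \<noteq> {}}"

definition proper_sv :: "('a \<Rightarrow> 'b set) \<Rightarrow> bool" where
  "proper_sv T \<longleftrightarrow> dom_sv T \<noteq> {}"

definition monotone_sv :: "('a::real_inner \<Rightarrow> 'a set) \<Rightarrow> bool" where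
  "monotone_sv T \<longleftrightarrow>
     (\<forall>u1 v1 u2 v2. (u1, v1) \<in> gph T \<longrightarrow> (u2, v2) \<in> gph T \<longrightarrow>
        inner (v1 - v2) (u1 - u2) \<ge> 0)"

definition maximal_monotone :: "('a::real_inner \<Rightarrow> 'a set) \<Rightarrow> bool" where
  "maximal_monotone T \<longleftrightarrow> monotone_sv T \<and>
     (\<forall>S. monotone_sv S \<and> gph T \<subseteq> gph S \<longrightarrow> gph T = gph S)"

definition hypomonotone :: "('a::real_inner \<Rightarrow> 'a set) \<Rightarrow> bool" where
  "hypomonotone T \<longleftrightarrow> (\<exists>r>0.
     \<forall>u1 v1 u2 v2. (u1, v1) \<in> gph T \<longrightarrow> (u2, v2) \<in> gph T \<longrightarrow>
        inner (v1 - v2) (u1 - u2) \<ge> - r * (norm (u1 - u2))\<^sup>2)"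

definition regular_normal_cone :: "'b::real_inner \<Rightarrow> 'b set \<Rightarrow> 'b set" where
  "regular_normal_cone pbar \<Omega> =
     {q. Limsup (at pbar within \<Omega>)
           (\<lambda>p. ereal (inner q (p - pbar) / norm (p - pbar))) \<le> 0}"

definition regular_coderivative ::
  "('a::real_inner \<Rightarrow> 'a set) \<Rightarrow> 'a \<times> 'a \<Rightarrow> 'a \<Rightarrow> 'a set" where
  "regular_coderivative T uv w = {z. (z, - w) \<in> regular_normal_cone uv (gph T)}"

end

theory Submission
  imports Defs
begin

text \<open>
  Necessity: a maximal monotone map is monotone, hence hypomonotone; and if inner z w < 0 for
  some z in the regular coderivative, Minty's theorem (obtained from Kirszbraun's extension
  theorem applied to the Cayley transform (u, v) \<mapsto> (u - v, u + v)) supplies graph points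
  moving in the direction (z, -w) fast enough to contradict the regular normal inequality.

  Sufficiency: for an r-hypomonotone T and \<lambda> = r + 1 the map (u, v) \<mapsto> v + \<lambda> u is
  injective on the graph with a 1-Lipschitz inverse, so its range is closed. A point outside the
  range would, by the Borwein--Preiss variational principle, yield a proximal normal to the range,
  i.e. a coderivative pair with inner z w < 0. Hence the resolvent J = (T + \<lambda> I)\<inverse> is
  defined everywhere. The coderivative condition bounds all proximal subgradients of
  x \<mapsto> inner e (2\<lambda> J x - x) by norm e, so a proximal mean value inequality makes the
  reflection 2\<lambda> J - I nonexpansive; this is equivalent to monotonicity of T, and
  surjectivity of T + \<lambda> I gives maximality.
\<close>

lemma regular_normal_coneI_quadratic:
  fixes q pbar :: "'b::real_inner"
  assumes "\<And>p. p \<in> \<Omega> \<Longrightarrow> inner q (p - pbar) \<le> C * (norm (p - pbar))\<^sup>2"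
  shows "q \<in> regular_normal_cone pbar \<Omega>"
proof -
  let ?F = "at pbar within \<Omega>"
  let ?f = "\<lambda>p. ereal (inner q (p - pbar) / norm (p - pbar))"
  let ?g = "\<lambda>p. ereal (C * norm (p - pbar))"
  have le: "eventually (\<lambda>p. ?f p \<le> ?g p) ?F"
    unfolding eventually_at_filter
  proof (intro always_eventually allI impI)
    fix p assume "p \<noteq> pbar" "p \<in> \<Omega>"
    then have "norm (p - pbar) > 0" "inner q (p - pbar) \<le> C * norm (p - pbar) * norm (p - pbar)"
      using assms by (simp_all add: power2_eq_square mult.assoc)
    then show "?f p \<le> ?g p" by (simp add: divide_le_eq)
  qed
  have lim: "(?g \<longlongrightarrow> ereal 0) ?F"
  proof -
    have "((\<lambda>p. C * norm (p - pbar)) \<longlongrightarrow> C * norm (pbar - pbar)) ?F"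
      by (intro tendsto_intros)
    then show ?thesis by (intro tendsto_intros) simp
  qed
  have "Limsup ?F ?f \<le> 0" if "?F \<noteq> bot"
  proof -
    have "Limsup ?F ?f \<le> Limsup ?F ?g" by (rule Limsup_mono[OF le])
    also have "\<dots> = 0" using lim_imp_Limsup[OF that lim] by (simp add: zero_ereal_def)
    finally show ?thesis .
  qed
  then show ?thesis by (cases "?F = bot") (auto simp: regular_normal_cone_def)
qed

lemma regular_normal_coneD:
  fixes q pbar :: "'b::real_inner"
  assumes "q \<in> regular_normal_cone pbar \<Omega>" "e > 0"
  obtains d where "d > 0"
    "\<And>p. p \<in> \<Omega> \<Longrightarrow> dist p pbar < d \<Longrightarrow> inner q (p - pbar) \<le> e * norm (p - pbar)"
proof -
  let ?f = "\<lambda>p. ereal (inner q (p - pbar) / norm (p - pbar))"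
  have "Limsup (at pbar within \<Omega>) ?f < ereal e"
    using assms unfolding regular_normal_cone_def by (auto intro: le_less_trans)
  then have "eventually (\<lambda>p. ?f p < ereal e) (at pbar within \<Omega>)"
    by (rule Limsup_lessD)
  then obtain d where "d > 0"
    and d: "\<And>p. p \<in> \<Omega> \<Longrightarrow> p \<noteq> pbar \<Longrightarrow> dist p pbar < d \<Longrightarrow> ?f p < ereal e"
    unfolding eventually_at by blast
  moreover have "inner q (p - pbar) \<le> e * norm (p - pbar)" if "p \<in> \<Omega>" "dist p pbar < d" for p
    using d[OF that(1) _ that(2)] by (cases "p = pbar") (simp_all add: divide_less_eq)
  ultimately show thesis using that by blast
qed

text \<open>Proximal subgradients relative to D, with the quadratic minorant required on all of D
  rather than only near x.\<close>

definition proximal_subgradient :: "('a::real_inner \<Rightarrow> real) \<Rightarrow> 'a set \<Rightarrow> 'a \<Rightarrow> 'a set" where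
  "proximal_subgradient f D x =
     {G. \<exists>K\<ge>0. \<forall>z\<in>D. f x + inner G (z - x) \<le> f z + K * (norm (z - x))\<^sup>2}"

lemma near_minimizer_exists:
  fixes h :: "'a \<Rightarrow> real"
  assumes "y \<in> D" "bdd_below (h ` D)" "e > 0"
  obtains z where "z \<in> D" "h z \<le> h y" "\<And>w. w \<in> D \<Longrightarrow> h z \<le> h w + e"
proof -
  let ?I = "Inf (h ` D)"
  have le: "\<And>w. w \<in> D \<Longrightarrow> ?I \<le> h w" using assms(2) by (auto intro: cInf_lower)
  show thesis
  proof (cases "h y \<le> ?I + e")
    case True
    show ?thesis by (rule that[OF assms(1)]) (use True le in force)+
  next
    case False
    have "?I < ?I + e" using assms(3) by simp
    then obtain w0 where "w0 \<in> D" "h w0 < ?I + e"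
      using cInf_lessD[of "h ` D" "?I + e"] assms(1) by auto
    then show ?thesis by (intro that) (use False le in force)+
  qed
qed

lemma Cauchy_if_dist_le_null:
  fixes Y :: "nat \<Rightarrow> 'a::metric_space"
  assumes bound: "\<And>m n. n \<le> m \<Longrightarrow> dist (Y m) (Y n) \<le> b n" and null: "b \<longlonglongrightarrow> 0"
  shows "Cauchy Y"
proof (rule metric_CauchyI)
  fix e :: real assume "e > 0"
  then obtain N where "\<forall>n\<ge>N. norm (b n - 0) < e / 2"
    using LIMSEQ_D[OF null, of "e / 2"] by auto
  then have bN: "b N < e / 2" by auto
  have "dist (Y m) (Y n) < e" if "m \<ge> N" "n \<ge> N" for m n
  proof -
    have "dist (Y m) (Y n) \<le> dist (Y m) (Y N) + dist (Y n) (Y N)" by (rule dist_triangle2)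
    also have "\<dots> \<le> b N + b N" using bound that by (intro add_mono)
    finally show ?thesis using bN by simp
  qed
  then show "\<exists>N. \<forall>m\<ge>N. \<forall>n\<ge>N. dist (Y m) (Y n) < e" by blast
qed

text \<open>The library's comparison test assumes the class banach, which the sort
  {real_inner, complete_space} of the main theorem does not provide.\<close>

lemma summable_if_norm_le_summable:
  fixes a :: "nat \<Rightarrow> 'a::{real_normed_vector,complete_space}"
  assumes le: "\<And>k. norm (a k) \<le> g k" and g: "summable g"
  shows "summable a" "norm (suminf a) \<le> suminf g"
proof -
  have g_nonneg: "g k \<ge> 0" for k using le[of k] norm_ge_zero order_trans by blast
  have partial_le: "sum g {..<m} \<le> suminf g" for m by (rule sum_le_suminf[OF g]) (use g_nonneg in auto)
  have "dist (sum a {..<m}) (sum a {..<n}) \<le> suminf g - sum g {..<n}" if "n \<le> m" for m n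
  proof -
    have "dist (sum a {..<m}) (sum a {..<n}) = norm (sum a {n..<m})"
      using sum_diff_nat_ivl[OF _ that, of 0 a] by (simp add: dist_norm atLeast0LessThan)
    also have "\<dots> \<le> sum g {n..<m}" using le by (intro sum_norm_le) auto
    also have "\<dots> = sum g {..<m} - sum g {..<n}"
      using sum_diff_nat_ivl[OF _ that, of 0 g] by (simp add: atLeast0LessThan)
    finally show ?thesis using partial_le[of m] by linarith
  qed
  moreover have "(\<lambda>n. suminf g - sum g {..<n}) \<longlonglongrightarrow> 0"
    using tendsto_diff[OF tendsto_const summable_LIMSEQ[OF g], of "suminf g"] by simp
  ultimately have "Cauchy (\<lambda>n. sum a {..<n})" by (rule Cauchy_if_dist_le_null)
  then show sa: "summable a" by (simp add: Cauchy_convergent_iff summable_iff_convergent)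
  have "norm (sum a {..<n}) \<le> suminf g" for n
    using sum_norm_le[of "{..<n}" a g] le partial_le[of n] by force
  then show "norm (suminf a) \<le> suminf g"
    by (intro LIMSEQ_le_const2[OF tendsto_norm[OF summable_LIMSEQ[OF sa]]]) auto
qed

lemma nested_closed_sets_shrink_to_limit:
  fixes Y :: "nat \<Rightarrow> 'a::{metric_space,complete_space}"
  assumes closed: "\<And>n. closed (S n)" and dec: "decseq S" and mem: "\<And>n. Y n \<in> S n"
    and shrink: "\<And>n z. z \<in> S (Suc n) \<Longrightarrow> dist z (Y n) \<le> rad n" and null: "rad \<longlonglongrightarrow> 0"
  obtains ys where "Y \<longlonglongrightarrow> ys" "\<And>n. ys \<in> S n" "\<And>n. dist ys (Y n) \<le> rad n"
    "\<And>z. (\<And>n. z \<in> S n) \<Longrightarrow> z = ys"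
proof -
  have sub: "S m \<subseteq> S n" if "n \<le> m" for m n using dec that by (simp add: decseq_def)
  have bound: "dist (Y m) (Y n) \<le> rad n" if "n \<le> m" for m n
  proof (cases "m = n")
    case True
    have "0 \<le> dist (Y (Suc n)) (Y n)" by simp
    also have "\<dots> \<le> rad n" using shrink mem by blast
    finally show ?thesis using True by simp
  next
    case False
    then have "Y m \<in> S (Suc n)" using that sub[of "Suc n" m] mem by auto
    then show ?thesis by (rule shrink)
  qed
  have "convergent Y"
    using Cauchy_convergent_iff Cauchy_if_dist_le_null[OF bound null] by blast
  then obtain ys where lim: "Y \<longlonglongrightarrow> ys" unfolding convergent_def by blast
  have in_S: "ys \<in> S n" for n
  proof -
    have "Y (m + n) \<in> S n" for m using sub[of n "m + n"] mem[of "m + n"] by auto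
    moreover have "(\<lambda>m. Y (m + n)) \<longlonglongrightarrow> ys" using lim by (rule LIMSEQ_ignore_initial_segment)
    ultimately show ?thesis by (rule closed_sequentially[OF closed])
  qed
  have unique: "z = ys" if "\<And>n. z \<in> S n" for z
  proof -
    have "dist (Y n) z \<le> rad n" for n using shrink[OF that] by (simp add: dist_commute)
    then have "(\<lambda>n. dist (Y n) z) \<longlonglongrightarrow> 0"
      by (intro Lim_null_comparison[OF _ null] always_eventually) simp
    then have "Y \<longlonglongrightarrow> z" by (rule tendsto_dist_iff[THEN iffD2])
    then show ?thesis using lim LIMSEQ_unique by blast
  qed
  have dist_le: "dist ys (Y n) \<le> rad n" for n using in_S by (rule shrink)
  show thesis by (rule that[OF lim in_S dist_le unique])
qed

definition penalized :: "('a::real_normed_vector \<Rightarrow> real) \<Rightarrow> (nat \<Rightarrow> real) \<Rightarrow> (nat \<Rightarrow> 'a) \<Rightarrow> nat \<Rightarrow> 'a \<Rightarrow> real" where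
  "penalized f mu Y n z = f z + (\<Sum>k<n. mu k * (norm (z - Y k))\<^sup>2)"

lemma penalized_0 [simp]: "penalized f mu Y 0 z = f z"
  by (simp add: penalized_def)

lemma penalized_Suc:
  "penalized f mu Y (Suc n) z = penalized f mu Y n z + mu n * (norm (z - Y n))\<^sup>2"
  by (simp add: penalized_def)

lemma penalized_sequence_exists:
  fixes f :: "'a::real_normed_vector \<Rightarrow> real"
  assumes bdd: "bdd_below (f ` D)" and y0: "y0 \<in> D" "\<And>w. w \<in> D \<Longrightarrow> f y0 \<le> f w + ep 0"
    and ep: "\<And>n. ep n > 0" and mu: "\<And>n. mu n \<ge> 0"
  obtains Y where "Y 0 = y0" "\<And>n. Y n \<in> D"
    "\<And>n w. w \<in> D \<Longrightarrow> penalized f mu Y n (Y n) \<le> penalized f mu Y n w + ep n"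
    "\<And>n. penalized f mu Y (Suc n) (Y (Suc n)) \<le> penalized f mu Y n (Y n)"
proof -
  \<comment> \<open>Dependent choice on the current point paired with the penalty accumulated so far.\<close>
  define Inv where "Inv n s \<longleftrightarrow> fst s \<in> D \<and> (\<forall>z. snd s z \<ge> 0) \<and>
      (\<forall>w\<in>D. f (fst s) + snd s (fst s) \<le> f w + snd s w + ep n) \<and> (n = 0 \<longrightarrow> s = (y0, \<lambda>_. 0))"
    for n and s :: "'a \<times> ('a \<Rightarrow> real)"
  define Step where "Step n s s' \<longleftrightarrow> snd s' = (\<lambda>z. snd s z + mu n * (norm (z - fst s))\<^sup>2) \<and>
      f (fst s') + snd s' (fst s') \<le> f (fst s) + snd s' (fst s)"
    for n and s s' :: "'a \<times> ('a \<Rightarrow> real)"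
  have "\<exists>s'. Inv (Suc n) s' \<and> Step n s s'" if "Inv n s" for n s
  proof -
    obtain y P where s: "s = (y, P)" by fastforce
    define P' where "P' z = P z + mu n * (norm (z - y))\<^sup>2" for z
    have P'_nonneg: "P' z \<ge> 0" for z using that mu[of n] by (simp add: s P'_def Inv_def)
    obtain m where "\<And>w. w \<in> D \<Longrightarrow> m \<le> f w" using bdd by (auto simp: bdd_below_def)
    then have bdd': "bdd_below ((\<lambda>z. f z + P' z) ` D)"
      by (intro bdd_belowI2[of _ m]) (use P'_nonneg add_increasing2 in blast)
    have "y \<in> D" using that by (simp add: s Inv_def)
    then obtain y' where "y' \<in> D" "f y' + P' y' \<le> f y + P' y"
      "\<And>w. w \<in> D \<Longrightarrow> f y' + P' y' \<le> f w + P' w + ep (Suc n)"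
      using near_minimizer_exists[OF _ bdd' ep[of "Suc n"]] by blast
    then show ?thesis using P'_nonneg
      by (intro exI[of _ "(y', P')"]) (auto simp: Inv_def Step_def s P'_def[abs_def])
  qed
  moreover have "Inv 0 (y0, \<lambda>_. 0)" using y0 by (simp add: Inv_def)
  ultimately obtain s where s: "\<And>n. Inv n (s n)" "\<And>n. Step n (s n) (s (Suc n))"
    using dependent_nat_choice[of Inv Step] by blast
  define Y where "Y n = fst (s n)" for n
  have snd_s: "snd (s n) z = (\<Sum>k<n. mu k * (norm (z - Y k))\<^sup>2)" for n z
  proof (induction n arbitrary: z)
    case 0 then show ?case using s(1)[of 0] by (simp add: Inv_def)
  next
    case (Suc n) then show ?case using s(2)[of n] by (simp add: Step_def Y_def)
  qed
  have penalized_s: "penalized f mu Y n z = f z + snd (s n) z" for n z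
    by (simp add: penalized_def snd_s)
  show thesis
  proof (rule that)
    show "Y 0 = y0" using s(1)[of 0] by (simp add: Inv_def Y_def)
    show "Y n \<in> D" for n using s(1)[of n] by (simp add: Inv_def Y_def)
    show "penalized f mu Y n (Y n) \<le> penalized f mu Y n w + ep n" if "w \<in> D" for n w
      using s(1)[of n] that by (simp add: Inv_def Y_def penalized_s)
    show "penalized f mu Y (Suc n) (Y (Suc n)) \<le> penalized f mu Y n (Y n)" for n
      using s(2)[of n] by (auto simp: Step_def Y_def penalized_s)
  qed
qed

lemma norm_add_square:
  fixes a b :: "'a::real_inner"
  shows "(norm (a + b))\<^sup>2 = (norm a)\<^sup>2 + 2 * inner a b + (norm b)\<^sup>2"
  by (simp add: power2_norm_eq_inner inner_add_left inner_add_right inner_commute)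

lemma penalized_diff:
  fixes Y :: "nat \<Rightarrow> 'a::real_inner"
  shows "penalized f mu Y n z - penalized f mu Y n y =
    f z - f y + (\<Sum>k<n. mu k) * (norm (z - y))\<^sup>2 + 2 * inner (z - y) (\<Sum>k<n. mu k *\<^sub>R (y - Y k))"
proof -
  have "(norm (z - Y k))\<^sup>2 - (norm (y - Y k))\<^sup>2 = (norm (z - y))\<^sup>2 + 2 * inner (z - y) (y - Y k)" for k
    using norm_add_square[of "z - y" "y - Y k"] by simp
  then have "(\<Sum>k<n. mu k * (norm (z - Y k))\<^sup>2) - (\<Sum>k<n. mu k * (norm (y - Y k))\<^sup>2) =
      (\<Sum>k<n. mu k * (norm (z - y))\<^sup>2 + 2 * inner (z - y) (mu k *\<^sub>R (y - Y k)))"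
    by (simp add: sum_subtractf[symmetric] right_diff_distrib[symmetric] distrib_left mult.left_commute)
  also have "\<dots> = (\<Sum>k<n. mu k) * (norm (z - y))\<^sup>2 + 2 * inner (z - y) (\<Sum>k<n. mu k *\<^sub>R (y - Y k))"
    by (simp add: sum.distrib sum_distrib_right sum_distrib_left inner_sum_right)
  finally show ?thesis by (simp add: penalized_def)
qed

lemma proximal_subgradient_of_penalized_limit:
  fixes Y :: "nat \<Rightarrow> 'a::{real_inner,complete_space}"
  assumes mu: "\<And>k. mu k \<ge> 0" "summable mu"
    and bound: "\<And>k. mu k * dist y (Y k) \<le> g k" and g: "summable g"
    and eventually_le: "\<And>z. z \<in> D \<Longrightarrow>
      eventually (\<lambda>n. penalized f mu Y n y \<le> penalized f mu Y n z) sequentially"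
  obtains G where "G \<in> proximal_subgradient f D y" "norm G \<le> 2 * suminf g"
proof -
  define a where "a k = mu k *\<^sub>R (y - Y k)" for k
  have "norm (a k) \<le> g k" for k using bound[of k] mu(1)[of k] by (simp add: a_def dist_norm)
  from summable_if_norm_le_summable[OF this g]
  have V: "a sums suminf a" and norm_V: "norm (suminf a) \<le> suminf g" by (simp_all add: summable_sums)
  let ?K = "suminf mu"
  have "f y - f z \<le> ?K * (norm (z - y))\<^sup>2 + 2 * inner (z - y) (suminf a)" if "z \<in> D" for z
  proof (rule tendsto_lowerbound)
    show "(\<lambda>n. ?K * (norm (z - y))\<^sup>2 + 2 * inner (z - y) (\<Sum>k<n. a k))
        \<longlonglongrightarrow> ?K * (norm (z - y))\<^sup>2 + 2 * inner (z - y) (suminf a)"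
      using V unfolding sums_def by (intro tendsto_intros)
    show "eventually (\<lambda>n. f y - f z \<le> ?K * (norm (z - y))\<^sup>2 + 2 * inner (z - y) (\<Sum>k<n. a k)) sequentially"
      using eventually_le[OF that]
    proof eventually_elim
      case (elim n)
      have "(\<Sum>k<n. mu k) * (norm (z - y))\<^sup>2 \<le> ?K * (norm (z - y))\<^sup>2"
        using sum_le_suminf[OF mu(2)] mu(1) by (intro mult_right_mono) auto
      then show ?case using elim penalized_diff[of f mu Y n z y] by (simp add: a_def)
    qed
  qed simp
  moreover have "?K \<ge> 0" using mu by (simp add: suminf_nonneg)
  ultimately have "- 2 *\<^sub>R suminf a \<in> proximal_subgradient f D y"
    unfolding proximal_subgradient_def
    by (intro CollectI exI[of _ ?K]) (auto simp: inner_commute algebra_simps)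
  moreover have "norm (- 2 *\<^sub>R suminf a) \<le> 2 * suminf g" using norm_V by simp
  ultimately show thesis by (rule that)
qed

lemma penalized_sequence_limit:
  fixes f :: "'a::{real_inner,complete_space} \<Rightarrow> real"
  assumes D: "closed D" and cont: "continuous_on D f" and YD: "\<And>n. Y n \<in> D"
    and near_min: "\<And>n w. w \<in> D \<Longrightarrow> penalized f mu Y n (Y n) \<le> penalized f mu Y n w + mu n * (rad n)\<^sup>2"
    and descent: "\<And>n. penalized f mu Y (Suc n) (Y (Suc n)) \<le> penalized f mu Y n (Y n)"
    and mu: "\<And>n. mu n > 0" and rad: "\<And>n. rad n \<ge> 0" "rad \<longlonglongrightarrow> 0"
  obtains y where "y \<in> D" "f y \<le> f (Y 0)" "\<And>n. dist y (Y n) \<le> rad n"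
    "\<And>z. z \<in> D \<Longrightarrow> eventually (\<lambda>n. penalized f mu Y n y \<le> penalized f mu Y n z) sequentially"
proof -
  define F where "F = penalized f mu Y"
  define S where "S n = {z \<in> D. F n z \<le> F n (Y n)}" for n
  have step: "z \<in> S n \<and> dist z (Y n) \<le> rad n" if "z \<in> S (Suc n)" for n z
  proof -
    have zD: "z \<in> D" using that by (simp add: S_def)
    have "F n z + mu n * (norm (z - Y n))\<^sup>2 \<le> F (Suc n) (Y (Suc n))"
      using that by (simp add: S_def F_def penalized_Suc)
    also have "\<dots> \<le> F n (Y n)" using descent by (simp add: F_def)
    finally have decrease: "F n z + mu n * (norm (z - Y n))\<^sup>2 \<le> F n (Y n)" .
    have "0 \<le> mu n * (norm (z - Y n))\<^sup>2" using mu[of n] by simp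
    then have "z \<in> S n" using decrease zD by (simp add: S_def)
    have "mu n * (norm (z - Y n))\<^sup>2 \<le> mu n * (rad n)\<^sup>2"
      using decrease near_min[OF zD, of n] by (simp add: F_def)
    then have "norm (z - Y n) \<le> rad n" using mu[of n] rad(1)[of n] by (simp add: power2_le_iff_abs_le)
    with \<open>z \<in> S n\<close> show ?thesis by (simp add: dist_norm)
  qed
  have closed_S: "closed (S n)" for n
  proof -
    have "continuous_on D (F n)" unfolding F_def penalized_def by (intro continuous_intros cont)
    then have "closed (D \<inter> F n -` {..F n (Y n)})" by (intro continuous_closed_preimage D) auto
    moreover have "S n = D \<inter> F n -` {..F n (Y n)}" by (auto simp: S_def)
    ultimately show ?thesis by simp
  qed
  have dec: "decseq S" using step by (intro decseq_SucI) blast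
  have "Y n \<in> S n" for n using YD by (simp add: S_def)
  then obtain y where yS: "\<And>n. y \<in> S n" and y_rad: "\<And>n. dist y (Y n) \<le> rad n"
    and unique: "\<And>z. (\<And>n. z \<in> S n) \<Longrightarrow> z = y"
    using nested_closed_sets_shrink_to_limit[OF closed_S dec _ _ rad(2)] step by metis
  have "eventually (\<lambda>n. F n y \<le> F n z) sequentially" if zD: "z \<in> D" for z
  proof (cases "\<forall>n. z \<in> S n")
    case False
    then obtain N where "z \<notin> S N" by blast
    then have "z \<notin> S n" if "n \<ge> N" for n using dec that by (auto simp: decseq_def)
    then have "F n y \<le> F n z" if "n \<ge> N" for n using yS[of n] zD that by (force simp: S_def)
    then show ?thesis unfolding eventually_sequentially by blast
  next
    case True
    then have "z = y" using unique by blast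
    then show ?thesis by simp
  qed
  moreover have "y \<in> D" "f y \<le> f (Y 0)" using yS[of 0] by (simp_all add: S_def F_def)
  ultimately show thesis using that y_rad unfolding F_def by blast
qed

text \<open>Borwein--Preiss: f is minimized approximately with ever smaller quadratic penalties centred at
  the previous approximate minimizers; the limit point minimizes f plus the full penalty, so minus
  the gradient of that penalty is a small proximal subgradient there.\<close>

lemma smooth_variational_principle:
  fixes f :: "'a::{real_inner,complete_space} \<Rightarrow> real"
  assumes D: "closed D" and cont: "continuous_on D f" and bdd: "bdd_below (f ` D)"
    and y0: "y0 \<in> D" "\<And>w. w \<in> D \<Longrightarrow> f y0 \<le> f w + \<epsilon>" and \<epsilon>: "\<epsilon> > 0" and \<delta>: "\<delta> > 0"
  obtains y G where "y \<in> D" "norm (y - y0) \<le> \<delta>" "f y \<le> f y0"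
    "G \<in> proximal_subgradient f D y" "norm G \<le> 3 * \<epsilon> / \<delta>"
proof -
  define \<mu> where "\<mu> = \<epsilon> / \<delta>\<^sup>2"
  define mu where "mu k = \<mu> * (1/2) ^ k" for k :: nat
  define rad where "rad k = \<delta> * (1/2) ^ k" for k :: nat
  have \<mu>: "\<mu> > 0" using \<epsilon> \<delta> by (simp add: \<mu>_def)
  have mu_pos: "mu k > 0" for k using \<mu> by (simp add: mu_def)
  have "mu 0 * (rad 0)\<^sup>2 = \<epsilon>" using \<delta> by (simp add: mu_def rad_def \<mu>_def)
  then have tol: "\<And>w. w \<in> D \<Longrightarrow> f y0 \<le> f w + mu 0 * (rad 0)\<^sup>2" using y0(2) by simp
  have "mu n * (rad n)\<^sup>2 > 0" for n using mu_pos \<delta> by (simp add: rad_def)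
  then obtain Y where Y0: "Y 0 = y0" and YD: "\<And>n. Y n \<in> D"
    and near_min: "\<And>n w. w \<in> D \<Longrightarrow> penalized f mu Y n (Y n) \<le> penalized f mu Y n w + mu n * (rad n)\<^sup>2"
    and descent: "\<And>n. penalized f mu Y (Suc n) (Y (Suc n)) \<le> penalized f mu Y n (Y n)"
    using penalized_sequence_exists[where ep = "\<lambda>n. mu n * (rad n)\<^sup>2" and mu = mu, OF bdd y0(1) tol]
      less_imp_le[OF mu_pos] by blast
  have rad: "rad n \<ge> 0" "rad \<longlonglongrightarrow> 0" for n
    using \<delta> unfolding rad_def by (auto intro: tendsto_mult_right_zero LIMSEQ_realpow_zero)
  obtain y where y: "y \<in> D" "f y \<le> f (Y 0)" and y_rad: "\<And>n. dist y (Y n) \<le> rad n"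
    and eventually_le: "\<And>z. z \<in> D \<Longrightarrow> eventually (\<lambda>n. penalized f mu Y n y \<le> penalized f mu Y n z) sequentially"
    using penalized_sequence_limit[OF D cont YD near_min descent mu_pos rad] by blast
  have bound: "mu k * dist y (Y k) \<le> \<mu> * \<delta> * (1/4) ^ k" for k
  proof -
    have "mu k * dist y (Y k) \<le> mu k * rad k" using y_rad mu_pos[of k] by (intro mult_left_mono) auto
    also have "\<dots> = \<mu> * \<delta> * (1/4) ^ k" by (simp add: mu_def rad_def power_mult_distrib[symmetric])
    finally show ?thesis .
  qed
  have "summable (\<lambda>k. \<mu> * \<delta> * (1/4::real) ^ k)" "summable mu"
    unfolding mu_def by (intro summable_mult summable_geometric, simp)+
  then obtain G where G: "G \<in> proximal_subgradient f D y" and norm_G: "norm G \<le> 2 * (\<Sum>k. \<mu> * \<delta> * (1/4) ^ k)"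
    using proximal_subgradient_of_penalized_limit[OF less_imp_le[OF mu_pos] _ bound _ eventually_le] by blast
  note norm_G
  also have "\<dots> = 2 * (\<mu> * \<delta> * (4/3))" by (simp add: suminf_mult suminf_geometric)
  also have "\<dots> = (8/3) * \<epsilon> / \<delta>" using \<delta> by (simp add: \<mu>_def power2_eq_square)
  also have "\<dots> \<le> 3 * \<epsilon> / \<delta>" using \<epsilon> \<delta> by (simp add: field_simps)
  finally have "norm G \<le> 3 * \<epsilon> / \<delta>" .
  moreover have "norm (y - y0) \<le> \<delta>" using y_rad[of 0] by (simp add: dist_norm Y0 rad_def)
  ultimately show thesis using that y G Y0 by simp
qed

lemma proximal_subgradient_majorant:
  fixes f F \<phi> :: "'a::real_inner \<Rightarrow> real"
  assumes G: "G \<in> proximal_subgradient F D y"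
    and le: "\<And>z. z \<in> D \<Longrightarrow> F z \<le> f z + \<phi> z" and eq: "F y = f y + \<phi> y"
    and \<phi>: "\<And>z. z \<in> D \<Longrightarrow> \<phi> z \<le> \<phi> y + inner a (z - y) + M * (norm (z - y))\<^sup>2" and "M \<ge> 0"
  shows "G - a \<in> proximal_subgradient f D y"
proof -
  obtain K where "K \<ge> 0" and K: "\<And>z. z \<in> D \<Longrightarrow> F y + inner G (z - y) \<le> F z + K * (norm (z - y))\<^sup>2"
    using G by (auto simp: proximal_subgradient_def)
  have "f y + inner (G - a) (z - y) \<le> f z + (K + M) * (norm (z - y))\<^sup>2" if "z \<in> D" for z
    using K[OF that] le[OF that] \<phi>[OF that] eq by (simp add: inner_diff_left distrib_right)
  then show ?thesis
    using \<open>K \<ge> 0\<close> \<open>M \<ge> 0\<close> unfolding proximal_subgradient_def by (intro CollectI exI[of _ "K + M"]) auto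
qed

lemma quadratic_lower_bound:
  fixes M d c :: real
  assumes "M > 0"
  shows "- (c\<^sup>2 / (4 * M)) \<le> M * d\<^sup>2 - c * d"
proof -
  have "0 \<le> (2 * M * d - c)\<^sup>2 / (4 * M)" using assms by simp
  also have "\<dots> = M * d\<^sup>2 - c * d + c\<^sup>2 / (4 * M)"
    using assms by (simp add: power2_eq_square field_simps)
  finally show ?thesis by simp
qed

lemma lipschitz_plus_quadratic_lower_bound:
  fixes f :: "'a::real_inner \<Rightarrow> real"
  assumes f: "L-lipschitz_on UNIV f" and e: "norm e \<le> 1" and "k \<ge> 0" "M > 0"
  shows "f p + k * inner e (p - c) - (L + k)\<^sup>2 / (4 * M) \<le>
    f y + k * inner e (y - c) + M * (norm (y - p))\<^sup>2"
proof -
  have "f p - f y \<le> L * norm (y - p)"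
    using f abs_le_D1 by (fastforce simp: lipschitz_on_def dist_real_def dist_norm norm_minus_commute)
  moreover have "- inner e (y - p) \<le> norm (y - p)"
    using Cauchy_Schwarz_ineq2[of e "y - p"] e mult_right_mono[OF e norm_ge_zero[of "y - p"]] by linarith
  then have "k * inner e (p - c) - k * norm (y - p) \<le> k * inner e (y - c)"
    using \<open>k \<ge> 0\<close> mult_left_mono[of "- inner e (y - p)" "norm (y - p)" k]
      inner_diff_right[of e y c] inner_diff_right[of e p c] inner_diff_right[of e y p]
    by (simp add: algebra_simps)
  moreover have "- ((L + k)\<^sup>2 / (4 * M)) \<le> M * (norm (y - p))\<^sup>2 - (L + k) * norm (y - p)"
    by (rule quadratic_lower_bound[OF \<open>M > 0\<close>])
  ultimately show ?thesis by (simp add: algebra_simps)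
qed

lemma compact_infdist_attained:
  fixes A :: "'a::metric_space set"
  assumes "compact A" "A \<noteq> {}"
  obtains p where "p \<in> A" "infdist y A = dist y p"
proof -
  obtain p where p: "p \<in> A" "\<And>q. q \<in> A \<Longrightarrow> dist y p \<le> dist y q"
    using continuous_attains_inf[OF assms, of "dist y"] continuous_on_dist[OF continuous_on_const continuous_on_id]
    by blast
  have "infdist y A = dist y p"
  proof (rule antisym)
    show "infdist y A \<le> dist y p" by (rule infdist_le[OF p(1)])
    show "dist y p \<le> infdist y A"
      unfolding infdist_notempty[OF assms(2)] by (rule cINF_greatest) (use assms(2) p(2) in auto)
  qed
  with p(1) show thesis by (rule that)
qed

lemma closest_point_segment_forward:
  fixes a b y p :: "'a::real_inner"
  assumes p: "p \<in> closed_segment b a" "p \<noteq> b"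
    and closest: "\<And>q. q \<in> closed_segment b a \<Longrightarrow> dist y p \<le> dist y q"
  shows "inner (y - p) (a - b) \<ge> 0"
proof -
  obtain t where t: "0 \<le> t" "t \<le> 1" "p = b + t *\<^sub>R (a - b)"
    using p(1) by (auto simp: in_segment algebra_simps)
  have "t > 0" using t p(2) by (cases "t = 0") auto
  have "inner (y - p) (b - p) \<le> 0"
    using closest by (intro any_closest_point_dot[of "closed_segment b a"]) (auto simp: p(1))
  then have "0 \<le> t * inner (y - p) (a - b)" using t by simp
  then show ?thesis using \<open>t > 0\<close> by (simp add: zero_le_mult_iff)
qed

lemma proximal_subgradient_of_distance_penalty:
  fixes f :: "'a::real_inner \<Rightarrow> real"
  assumes G: "G \<in> proximal_subgradient (\<lambda>z. f z + inner c (z - b) + M * (infdist z A)\<^sup>2) D y"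
    and p: "p \<in> A" "infdist y A = dist y p" and M: "M \<ge> 0"
  shows "G - (c + (2 * M) *\<^sub>R (y - p)) \<in> proximal_subgradient f D y"
proof (rule proximal_subgradient_majorant[OF G, where \<phi> = "\<lambda>z. inner c (z - b) + M * (norm (z - p))\<^sup>2"])
  show "f z + inner c (z - b) + M * (infdist z A)\<^sup>2 \<le> f z + (inner c (z - b) + M * (norm (z - p))\<^sup>2)" for z
  proof -
    have "infdist z A \<le> norm (z - p)" using infdist_le[OF p(1)] by (simp add: dist_norm)
    then have "(infdist z A)\<^sup>2 \<le> (norm (z - p))\<^sup>2" by (simp add: infdist_nonneg power_mono)
    then show ?thesis using M by (simp add: mult_left_mono)
  qed
  show "f y + inner c (y - b) + M * (infdist y A)\<^sup>2 = f y + (inner c (y - b) + M * (norm (y - p))\<^sup>2)"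
    using p(2) by (simp add: dist_norm)
  show "inner c (z - b) + M * (norm (z - p))\<^sup>2 \<le> inner c (y - b) + M * (norm (y - p))\<^sup>2
      + inner (c + (2 * M) *\<^sub>R (y - p)) (z - y) + M * (norm (z - y))\<^sup>2" for z
  proof -
    have "(norm (z - p))\<^sup>2 = (norm (z - y))\<^sup>2 + 2 * inner (y - p) (z - y) + (norm (y - p))\<^sup>2"
      using norm_add_square[of "z - y" "y - p"] by (simp add: inner_commute)
    then have "M * (norm (z - p))\<^sup>2 =
        M * (norm (z - y))\<^sup>2 + 2 * M * inner (y - p) (z - y) + M * (norm (y - p))\<^sup>2"
      by (simp add: distrib_left)
    moreover have "inner c (z - b) = inner c (y - b) + inner c (z - y)" by (simp add: inner_diff_right)
    moreover have "inner (c + (2 * M) *\<^sub>R (y - p)) (z - y) = inner c (z - y) + 2 * M * inner (y - p) (z - y)"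
      by (simp add: inner_add_left)
    ultimately show ?thesis by linarith
  qed
qed (use M in simp)

lemma proximal_subgradient_toward_segment:
  fixes f :: "'a::real_inner \<Rightarrow> real"
  assumes e: "e = (1 / norm (a - b)) *\<^sub>R (a - b)" and "M \<ge> 0"
    and G: "G \<in> proximal_subgradient (\<lambda>y. f y + inner (k *\<^sub>R e) (y - b) + M * (infdist y (closed_segment b a))\<^sup>2) UNIV y"
    and p: "p \<in> closed_segment b a" "p \<noteq> b" "infdist y (closed_segment b a) = dist y p"
  obtains \<xi> where "\<xi> \<in> proximal_subgradient f UNIV y" "(k - norm G) * norm (a - b) \<le> inner \<xi> (b - a)"
proof -
  define \<xi> where "\<xi> = G - (k *\<^sub>R e + (2 * M) *\<^sub>R (y - p))"
  have \<xi>: "\<xi> \<in> proximal_subgradient f UNIV y"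
    unfolding \<xi>_def using G p(1,3) \<open>M \<ge> 0\<close> by (rule proximal_subgradient_of_distance_penalty)
  have "a \<noteq> b" using p(1,2) by auto
  have "dist y p \<le> dist y q" if "q \<in> closed_segment b a" for q using p(3) infdist_le[OF that, of y] by simp
  then have "inner (y - p) (a - b) \<ge> 0" using closest_point_segment_forward[OF p(1,2)] by blast
  then have toward_a: "inner (y - p) e \<ge> 0" by (simp add: e)
  have norm_e: "norm e = 1" using \<open>a \<noteq> b\<close> by (simp add: e)
  have "b - a = - (norm (a - b) *\<^sub>R e)" using \<open>a \<noteq> b\<close> by (simp add: e)
  then have "inner \<xi> (b - a) = - norm (a - b) * inner \<xi> e" by simp
  also have "inner \<xi> e = inner G e - k - 2 * M * inner (y - p) e"
    using norm_e by (simp add: \<xi>_def inner_diff_left inner_add_left power2_norm_eq_inner[symmetric])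
  finally have eqn: "inner \<xi> (b - a) = (k + 2 * M * inner (y - p) e - inner G e) * norm (a - b)"
    by (simp add: algebra_simps)
  have "inner G e \<le> norm G" using Cauchy_Schwarz_ineq2[of G e] norm_e by simp
  moreover have "0 \<le> 2 * M * inner (y - p) e" using \<open>M \<ge> 0\<close> toward_a by simp
  ultimately have "k - norm G \<le> k + 2 * M * inner (y - p) e - inner G e" by linarith
  then have "(k - norm G) * norm (a - b) \<le> inner \<xi> (b - a)" unfolding eqn by (rule mult_right_mono) simp
  with \<xi> show thesis by (rule that)
qed

text \<open>If f drops by more than slope k > 1 from b to a, penalizing f by k times the progress
  towards a and by the squared distance to the segment produces, via the variational principle,
  a point at which some proximal subgradient has slope at least (k + 1)/2 in the direction b - a.\<close>

lemma proximal_subgradient_detects_descent: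
  fixes f :: "'a::{real_inner,complete_space} \<Rightarrow> real"
  assumes lip: "L-lipschitz_on UNIV f" and k: "k > 1" and descent: "f a + k * norm (a - b) < f b"
  obtains y \<xi> where "\<xi> \<in> proximal_subgradient f UNIV y" "inner \<xi> (b - a) \<ge> (k + 1) / 2 * norm (a - b)"
proof -
  define e where "e = (1 / norm (a - b)) *\<^sub>R (a - b)"
  have "a \<noteq> b" using descent by auto
  then have norm_e: "norm e = 1" and e_ab: "inner e (a - b) = norm (a - b)"
    by (simp_all add: e_def power2_norm_eq_inner[symmetric] power2_eq_square)
  define \<eta> where "\<eta> = f b - f a - k * norm (a - b)"
  have \<eta>: "\<eta> > 0" using descent by (simp add: \<eta>_def)
  have L: "L \<ge> 0" using lip by (simp add: lipschitz_on_def)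
  define M where "M = (L + k)\<^sup>2 / \<eta> + 1"
  have M: "M > 0" using \<eta> by (simp add: M_def add_nonneg_pos)
  have small: "(L + k)\<^sup>2 / (4 * M) < \<eta>"
  proof -
    have "(L + k)\<^sup>2 = (M - 1) * \<eta>" using \<eta> by (simp add: M_def)
    also have "\<dots> < (4 * M) * \<eta>" using \<eta> M by (intro mult_strict_right_mono) auto
    finally show ?thesis using M by (simp add: divide_less_eq mult.commute)
  qed
  define seg where "seg = closed_segment b a"
  have compact_seg: "compact seg" "seg \<noteq> {}" by (simp_all add: seg_def)
  define F where "F y = f y + inner (k *\<^sub>R e) (y - b) + M * (infdist y seg)\<^sup>2" for y
  have F_lower: "f p + k * inner e (p - b) - (L + k)\<^sup>2 / (4 * M) \<le> F y"
    if "infdist y seg = dist y p" for p y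
    using lipschitz_plus_quadratic_lower_bound[OF lip _ _ M, of e k p b y] norm_e k that
    by (simp add: F_def dist_norm)
  have F_bound: "f b - L * norm (a - b) - (L + k)\<^sup>2 / (4 * M) \<le> F y" for y
  proof -
    obtain p where p: "p \<in> seg" "infdist y seg = dist y p" using compact_infdist_attained[OF compact_seg] .
    then obtain t where t: "0 \<le> t" "t \<le> 1" "p = b + t *\<^sub>R (a - b)"
      by (auto simp: seg_def in_segment algebra_simps)
    have "f b - f p \<le> L * norm (p - b)"
      using lip abs_le_D1 by (fastforce simp: lipschitz_on_def dist_real_def dist_norm norm_minus_commute)
    also have "\<dots> \<le> L * norm (a - b)" using t L by (intro mult_left_mono) (auto simp: mult_left_le_one_le)
    finally have "f b - L * norm (a - b) \<le> f p" by simp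
    moreover have "0 \<le> k * inner e (p - b)" using t k e_ab by simp
    ultimately show ?thesis using F_lower[OF p(2)] by linarith
  qed
  have cont: "continuous_on UNIV F"
    using lipschitz_on_continuous_on[OF lip] unfolding F_def by (intro continuous_intros) auto
  have bdd: "bdd_below (range F)" using F_bound by (intro bdd_belowI2)
  obtain z0 where z0: "F z0 \<le> F a" "\<And>w. w \<in> UNIV \<Longrightarrow> F z0 \<le> F w + \<eta> / 2"
    using near_minimizer_exists[OF UNIV_I bdd, of "\<eta> / 2"] \<eta> by auto
  define \<delta> where "\<delta> = 3 * (\<eta> / 2) / ((k - 1) / 2)"
  have \<delta>: "\<delta> > 0" and "3 * (\<eta> / 2) / \<delta> = (k - 1) / 2" using \<eta> k by (simp_all add: \<delta>_def)
  moreover obtain y G where y: "F y \<le> F z0" and G: "G \<in> proximal_subgradient F UNIV y"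
    and "norm G \<le> 3 * (\<eta> / 2) / \<delta>"
    using smooth_variational_principle[OF closed_UNIV cont bdd UNIV_I z0(2) half_gt_zero[OF \<eta>] \<delta>]
    by blast
  ultimately have norm_G: "norm G \<le> (k - 1) / 2" by simp
  obtain p where p: "p \<in> seg" "infdist y seg = dist y p" using compact_infdist_attained[OF compact_seg] .
  have "F a = f b - \<eta>" using e_ab by (simp add: F_def \<eta>_def seg_def)
  then have "p \<noteq> b" using F_lower[OF p(2)] y z0(1) small by auto
  then obtain \<xi> where "\<xi> \<in> proximal_subgradient f UNIV y" "(k - norm G) * norm (a - b) \<le> inner \<xi> (b - a)"
    using proximal_subgradient_toward_segment[OF e_def _ G[unfolded F_def[abs_def] seg_def]] p M
    unfolding seg_def by (metis less_imp_le)
  moreover have "(k + 1) / 2 * norm (a - b) \<le> (k - norm G) * norm (a - b)"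
    using norm_G by (intro mult_right_mono) auto
  ultimately show thesis using that by (meson order_trans)
qed

lemma proximal_mean_value_inequality:
  fixes f :: "'a::{real_inner,complete_space} \<Rightarrow> real"
  assumes lip: "L-lipschitz_on UNIV f"
    and bounded: "\<And>x G. G \<in> proximal_subgradient f UNIV x \<Longrightarrow> norm G \<le> 1"
  shows "f b - f a \<le> norm (a - b)"
proof (rule ccontr)
  assume "\<not> ?thesis"
  then have gap: "f b - f a > norm (a - b)" by simp
  then have ns: "norm (a - b) > 0" by auto
  define k where "k = (1 + (f b - f a) / norm (a - b)) / 2"
  have "(f b - f a) / norm (a - b) > 1" using gap ns by (simp add: less_divide_eq)
  then have k: "k > 1" by (simp add: k_def)
  have "k * norm (a - b) = (norm (a - b) + (f b - f a)) / 2" using ns by (simp add: k_def field_simps)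
  then have "f a + k * norm (a - b) < f b" using gap by argo
  then obtain y \<xi> where \<xi>: "\<xi> \<in> proximal_subgradient f UNIV y"
    and slope: "inner \<xi> (b - a) \<ge> (k + 1) / 2 * norm (a - b)"
    using proximal_subgradient_detects_descent[OF lip k] by blast
  have "inner \<xi> (b - a) \<le> norm (a - b)"
    using Cauchy_Schwarz_ineq2[of \<xi> "b - a"] bounded[OF \<xi>] mult_right_mono[of "norm \<xi>" 1 "norm (a - b)"]
    by (simp add: norm_minus_commute)
  moreover have "norm (a - b) < (k + 1) / 2 * norm (a - b)" using k ns by simp
  ultimately show False using slope by linarith
qed

lemma continuous_on_Max_image:
  fixes f :: "'i \<Rightarrow> 'a::topological_space \<Rightarrow> real"
  assumes "finite I" "I \<noteq> {}" "\<And>i. i \<in> I \<Longrightarrow> continuous_on S (f i)"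
  shows "continuous_on S (\<lambda>y. Max ((\<lambda>i. f i y) ` I))"
  using assms
proof (induction I rule: finite_ne_induct)
  case (insert i I)
  have "(\<lambda>y. Max ((\<lambda>j. f j y) ` insert i I)) = (\<lambda>y. max (f i y) (Max ((\<lambda>j. f j y) ` I)))"
    using insert by auto
  then show ?case using insert by (auto intro: continuous_on_max)
qed simp

lemma convex_combination_gram_bound:
  fixes u :: "'a::real_inner \<Rightarrow> 'b::real_inner"
  assumes "finite Q" and w: "\<And>q. q \<in> Q \<Longrightarrow> w q \<ge> 0" "sum w Q = 1" "(\<Sum>q\<in>Q. w q *\<^sub>R q) = y"
    and gram: "\<And>q q'. q \<in> Q \<Longrightarrow> q' \<in> Q \<Longrightarrow> \<mu> + inner (u q) (u q') \<le> inner (q - y) (q' - y)"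
  shows "\<mu> \<le> 0"
proof -
  have double_sum: "inner (\<Sum>q\<in>Q. w q *\<^sub>R v q) (\<Sum>q\<in>Q. w q *\<^sub>R v q) =
      (\<Sum>q\<in>Q. \<Sum>q'\<in>Q. w q * w q' * inner (v q) (v q'))" for v :: "'a \<Rightarrow> 'c::real_inner"
    by (simp add: inner_sum_left inner_sum_right sum_distrib_left mult.assoc, subst sum.swap,
        simp add: inner_commute mult.left_commute)
  have "(\<Sum>q\<in>Q. w q *\<^sub>R (q - y)) = 0"
    using w by (simp add: scaleR_diff_right sum_subtractf scaleR_sum_left[symmetric])
  then have "0 = (\<Sum>q\<in>Q. \<Sum>q'\<in>Q. w q * w q' * inner (q - y) (q' - y))"
    using double_sum[of "\<lambda>q. q - y"] by simp
  also have "\<dots> \<ge> (\<Sum>q\<in>Q. \<Sum>q'\<in>Q. w q * w q' * (\<mu> + inner (u q) (u q')))"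
    by (intro sum_mono mult_left_mono gram) (auto intro: w mult_nonneg_nonneg)
  also have "(\<Sum>q\<in>Q. \<Sum>q'\<in>Q. w q * w q' * (\<mu> + inner (u q) (u q'))) =
      \<mu> * (sum w Q)\<^sup>2 + inner (\<Sum>q\<in>Q. w q *\<^sub>R u q) (\<Sum>q\<in>Q. w q *\<^sub>R u q)"
    unfolding double_sum by (simp add: distrib_left sum.distrib sum_distrib_left sum_distrib_right
        power2_eq_square mult_ac)
  finally have "\<mu> + inner (\<Sum>q\<in>Q. w q *\<^sub>R u q) (\<Sum>q\<in>Q. w q *\<^sub>R u q) \<le> 0" using w(2) by simp
  then show ?thesis using inner_ge_zero[of "\<Sum>q\<in>Q. w q *\<^sub>R u q"] by linarith
qed

lemma minimizer_of_max_in_active_hull: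
  fixes c :: "'i \<Rightarrow> 'a::real_inner" and \<rho> :: "'i \<Rightarrow> real"
  assumes fin: "finite I" and K: "convex K" "c ` I \<subseteq> K" "y \<in> K"
    and le: "\<And>i. i \<in> I \<Longrightarrow> (norm (y - c i))\<^sup>2 - \<rho> i \<le> \<mu>"
    and min: "\<And>z. z \<in> K \<Longrightarrow> \<exists>i\<in>I. \<mu> \<le> (norm (z - c i))\<^sup>2 - \<rho> i"
  shows "y \<in> convex hull (c ` {i \<in> I. (norm (y - c i))\<^sup>2 - \<rho> i = \<mu>})"
proof (rule ccontr)
  define \<phi> where "\<phi> i z = (norm (z - c i))\<^sup>2 - \<rho> i" for i z
  define A where "A = {i \<in> I. \<phi> i y = \<mu>}"
  define CA where "CA = convex hull (c ` A)"
  assume "y \<notin> convex hull (c ` {i \<in> I. (norm (y - c i))\<^sup>2 - \<rho> i = \<mu>})"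
  then have y_CA: "y \<notin> CA" by (simp add: CA_def A_def \<phi>_def)
  have "A \<noteq> {}" using min[OF K(3)] le by (force simp: A_def \<phi>_def)
  then have CA: "compact CA" "CA \<noteq> {}" "convex CA" using fin by (simp_all add: CA_def A_def finite_imp_compact_convex_hull)
  obtain p where p: "p \<in> CA" "\<And>z. z \<in> CA \<Longrightarrow> dist y p \<le> dist y z"
    using continuous_attains_inf[OF CA(1,2), of "dist y"] continuous_on_dist[OF continuous_on_const continuous_on_id]
    by blast
  define d where "d = y - p"
  have "d \<noteq> 0" using y_CA p(1) by (auto simp: d_def)
  have "CA \<subseteq> K" unfolding CA_def using K(1,2) by (intro hull_minimal) (auto simp: A_def)
  have active: "inner d (c i - y) \<le> - (norm d)\<^sup>2" if "i \<in> A" for i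
  proof -
    have "c i \<in> CA" using that by (simp add: CA_def hull_inc)
    then have "inner d (c i - p) \<le> 0"
      unfolding d_def using CA p by (intro any_closest_point_dot) (auto intro: compact_imp_closed)
    then show ?thesis by (simp add: d_def inner_diff_right power2_norm_eq_inner)
  qed
  have along: "\<phi> i (y - t *\<^sub>R d) = \<phi> i y + 2 * t * inner d (c i - y) + t\<^sup>2 * (norm d)\<^sup>2" for i t
    using norm_add_square[of "y - c i" "- (t *\<^sub>R d)"]
    by (simp add: \<phi>_def inner_commute algebra_simps)
  have "eventually (\<lambda>t. \<phi> i (y - t *\<^sub>R d) < \<mu>) (at_right 0)" if iI: "i \<in> I" for i
  proof (cases "i \<in> A")
    case True
    have "\<phi> i (y - t *\<^sub>R d) < \<mu>" if "t \<in> {0<..<1}" for t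
    proof -
      have "t\<^sup>2 * (norm d)\<^sup>2 < 2 * t * (norm d)\<^sup>2"
        using that \<open>d \<noteq> 0\<close> by (simp add: power2_eq_square)
      moreover have "t * inner d (c i - y) \<le> t * - (norm d)\<^sup>2"
        using active[OF True] that by (intro mult_left_mono) auto
      ultimately show ?thesis using True by (simp add: along A_def)
    qed
    then show ?thesis using eventually_at_right_real[of 0 1] by (auto elim: eventually_mono)
  next
    case False
    then have "\<phi> i y < \<mu>" using le[OF iI] iI by (auto simp: A_def \<phi>_def)
    moreover have "((\<lambda>t. \<phi> i (y - t *\<^sub>R d)) \<longlongrightarrow> \<phi> i (y - 0 *\<^sub>R d)) (at_right 0)"
      unfolding \<phi>_def by (intro tendsto_intros)
    ultimately show ?thesis by (simp add: order_tendstoD(2))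
  qed
  then have "eventually (\<lambda>t. \<forall>i\<in>I. \<phi> i (y - t *\<^sub>R d) < \<mu>) (at_right 0)"
    by (intro eventually_ball_finite[OF fin]) auto
  then have "eventually (\<lambda>t. (\<forall>i\<in>I. \<phi> i (y - t *\<^sub>R d) < \<mu>) \<and> t \<in> {0<..<1}) (at_right 0)"
    using eventually_at_right_real[of 0 1] by (intro eventually_conj) auto
  then obtain t :: real where t: "\<forall>i\<in>I. \<phi> i (y - t *\<^sub>R d) < \<mu>" "t \<in> {0<..<1}"
    using eventually_happens[of _ "at_right (0::real)"] by auto
  have "y - t *\<^sub>R d = (1 - t) *\<^sub>R y + t *\<^sub>R p" by (simp add: d_def algebra_simps)
  then have "y - t *\<^sub>R d \<in> K" using K \<open>CA \<subseteq> K\<close> p(1) t(2) by (auto simp: convex_def)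
  with min t(1) show False by (force simp: \<phi>_def)
qed

lemma kirszbraun_finite:
  fixes c x :: "'i \<Rightarrow> 'a::real_inner"
  assumes fin: "finite I" and lip: "\<And>i j. i \<in> I \<Longrightarrow> j \<in> I \<Longrightarrow> norm (c i - c j) \<le> norm (x i - x j)"
  shows "\<exists>y. \<forall>i\<in>I. norm (y - c i) \<le> norm (x i - x0)"
proof (cases "I = {}")
  case False
  define \<phi> where "\<phi> i z = (norm (z - c i))\<^sup>2 - (norm (x i - x0))\<^sup>2" for i z
  define K where "K = convex hull (c ` I)"
  have K: "compact K" "K \<noteq> {}" using fin False by (simp_all add: K_def finite_imp_compact_convex_hull)
  have "continuous_on K (\<lambda>z. Max ((\<lambda>i. \<phi> i z) ` I))"
    unfolding \<phi>_def by (rule continuous_on_Max_image[OF fin False]) (intro continuous_intros)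
  from continuous_attains_inf[OF K this]
  obtain y where "y \<in> K" and y_min: "\<And>z. z \<in> K \<Longrightarrow> Max ((\<lambda>i. \<phi> i y) ` I) \<le> Max ((\<lambda>i. \<phi> i z) ` I)"
    by blast
  define \<mu> where "\<mu> = Max ((\<lambda>i. \<phi> i y) ` I)"
  have le: "\<phi> i y \<le> \<mu>" if "i \<in> I" for i using fin that by (simp add: \<mu>_def)
  have min: "\<exists>i\<in>I. \<mu> \<le> \<phi> i z" if "z \<in> K" for z
  proof -
    have "Max ((\<lambda>i. \<phi> i z) ` I) \<in> (\<lambda>i. \<phi> i z) ` I" using fin False by (intro Max_in) auto
    then show ?thesis using y_min[OF that] unfolding \<mu>_def by force
  qed
  define A where "A = {i \<in> I. \<phi> i y = \<mu>}"
  have "y \<in> convex hull (c ` A)"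
    unfolding A_def \<phi>_def
  proof (rule minimizer_of_max_in_active_hull[OF fin])
    show "convex K" "c ` I \<subseteq> K" by (simp_all add: K_def hull_subset)
    show "y \<in> K" by fact
    show "(norm (y - c i))\<^sup>2 - (norm (x i - x0))\<^sup>2 \<le> \<mu>" if "i \<in> I" for i using le[OF that] by (simp add: \<phi>_def)
    show "\<exists>i\<in>I. \<mu> \<le> (norm (z - c i))\<^sup>2 - (norm (x i - x0))\<^sup>2" if "z \<in> K" for z
      using min[OF that] by (simp add: \<phi>_def)
  qed
  moreover have "finite (c ` A)" using fin by (simp add: A_def)
  ultimately obtain w where w: "\<And>q. q \<in> c ` A \<Longrightarrow> 0 \<le> w q" "sum w (c ` A) = 1" "(\<Sum>q\<in>c ` A. w q *\<^sub>R q) = y"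
    unfolding convex_hull_finite[OF \<open>finite (c ` A)\<close>] by blast
  define u where "u q = x (inv_into A c q) - x0" for q
  have preimage: "inv_into A c q \<in> A" "c (inv_into A c q) = q" if "q \<in> c ` A" for q
    using that by (auto intro: inv_into_into f_inv_into_f)
  have on_sphere: "(norm (q - y))\<^sup>2 = \<mu> + (norm (u q))\<^sup>2" if "q \<in> c ` A" for q
    using preimage[OF that] unfolding A_def \<phi>_def u_def by (simp add: norm_minus_commute)
  have "\<mu> + inner (u q) (u q') \<le> inner (q - y) (q' - y)" if "q \<in> c ` A" "q' \<in> c ` A" for q q'
  proof -
    have "norm (q - q') \<le> norm (u q - u q')"
      using lip[of "inv_into A c q" "inv_into A c q'"] preimage[OF that(1)] preimage[OF that(2)]
      unfolding A_def u_def by simp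
    then have "(norm (q - q'))\<^sup>2 \<le> (norm (u q - u q'))\<^sup>2" by (simp add: power_mono)
    moreover have "inner (q - y) (q' - y) = ((norm (q - y))\<^sup>2 + (norm (q' - y))\<^sup>2 - (norm (q - q'))\<^sup>2) / 2"
      using dot_norm_neg[of "q - y" "q' - y"] by simp
    moreover have "inner (u q) (u q') = ((norm (u q))\<^sup>2 + (norm (u q'))\<^sup>2 - (norm (u q - u q'))\<^sup>2) / 2"
      by (rule dot_norm_neg)
    ultimately show ?thesis using on_sphere[OF that(1)] on_sphere[OF that(2)] by argo
  qed
  then have "\<mu> \<le> 0" using w \<open>finite (c ` A)\<close> by (intro convex_combination_gram_bound)
  then have "(norm (y - c i))\<^sup>2 \<le> (norm (x i - x0))\<^sup>2" if "i \<in> I" for i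
    using le[OF that] unfolding \<phi>_def by linarith
  then show ?thesis by (auto intro: power2_le_imp_le)
qed simp

lemma near_minimal_norm_points_close:
  fixes a b :: "'a::real_inner"
  assumes "convex C" "a \<in> C" "b \<in> C" and lower: "\<And>z. z \<in> C \<Longrightarrow> \<sigma> - e \<le> (norm z)\<^sup>2"
    and "(norm a)\<^sup>2 \<le> \<sigma> + e" "(norm b)\<^sup>2 \<le> \<sigma> + e"
  shows "norm (a - b) \<le> sqrt (8 * e)"
proof -
  have "(1/2) *\<^sub>R a + (1/2) *\<^sub>R b \<in> C" using assms(1-3) by (simp add: convex_def)
  then have "\<sigma> - e \<le> (norm ((1/2) *\<^sub>R (a + b)))\<^sup>2" using lower by (simp add: scaleR_add_right)
  moreover have "(norm (a - b))\<^sup>2 + 4 * (norm ((1/2) *\<^sub>R (a + b)))\<^sup>2 = 2 * (norm a)\<^sup>2 + 2 * (norm b)\<^sup>2"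
    by (simp add: power2_norm_eq_inner inner_commute algebra_simps)
  ultimately have "(norm (a - b))\<^sup>2 \<le> 8 * e" using assms(5,6) by linarith
  then show ?thesis by (simp add: real_le_rsqrt)
qed

lemma near_minimal_norm_sequences_converge:
  fixes C :: "nat \<Rightarrow> 'a::{real_inner,complete_space} set"
  assumes convex: "\<And>n. convex (C n)" and dec: "decseq C"
    and lower: "\<And>n z. z \<in> C n \<Longrightarrow> \<sigma> - e n \<le> (norm z)\<^sup>2" and "decseq e" "e \<longlonglongrightarrow> 0"
    and y: "\<And>n. y n \<in> C n" "\<And>n. (norm (y n))\<^sup>2 \<le> \<sigma> + e n"
  obtains yl where "\<And>z. (\<And>n. z n \<in> C n) \<Longrightarrow> (\<And>n. (norm (z n))\<^sup>2 \<le> \<sigma> + e n) \<Longrightarrow> z \<longlonglongrightarrow> yl"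
proof -
  have close: "norm (z - y n) \<le> sqrt (8 * e n)" if "z \<in> C n" "(norm z)\<^sup>2 \<le> \<sigma> + e n" for z n
    using near_minimal_norm_points_close[OF convex that(1) y(1) lower that(2) y(2)] .
  have null: "(\<lambda>n. sqrt (8 * e n)) \<longlonglongrightarrow> 0"
    using tendsto_real_sqrt[OF tendsto_mult_right_zero[OF \<open>e \<longlonglongrightarrow> 0\<close>, of 8]] by simp
  have "dist (y m) (y n) \<le> sqrt (8 * e n)" if "n \<le> m" for m n
    using close[of "y m" n] y[of m] dec \<open>decseq e\<close> that by (force simp: dist_norm decseq_def)
  then have "Cauchy y" using null by (rule Cauchy_if_dist_le_null)
  then obtain yl where yl: "y \<longlonglongrightarrow> yl" using Cauchy_convergent_iff convergent_def by blast
  have "z \<longlonglongrightarrow> yl" if "\<And>n. z n \<in> C n" "\<And>n. (norm (z n))\<^sup>2 \<le> \<sigma> + e n" for z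
  proof -
    have "(\<lambda>n. z n - y n) \<longlonglongrightarrow> 0"
      using close[OF that] by (intro Lim_null_comparison[OF _ null] always_eventually) simp
    then show ?thesis using tendsto_add[OF _ yl] by fastforce
  qed
  then show thesis by (rule that)
qed

lemma sup_approximated_along_chain:
  fixes s :: "'i set \<Rightarrow> real"
  assumes mono: "\<And>F G. finite G \<and> G \<subseteq> I \<Longrightarrow> F \<subseteq> G \<Longrightarrow> s F \<le> s G"
    and bdd: "bdd_above (s ` {F. finite F \<and> F \<subseteq> I})" and e: "\<And>n. e n > 0"
  obtains H \<sigma> where "\<And>n. finite (H n) \<and> H n \<subseteq> I" "incseq H"
    "\<And>F. finite F \<and> F \<subseteq> I \<Longrightarrow> s F \<le> \<sigma>" "\<And>n. \<sigma> - e n < s (H n)"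
proof -
  define \<sigma> where "\<sigma> = (SUP F\<in>{F. finite F \<and> F \<subseteq> I}. s F)"
  have ne: "{F. finite F \<and> F \<subseteq> I} \<noteq> {}" by blast
  have upper: "s F \<le> \<sigma>" if "finite F \<and> F \<subseteq> I" for F
    unfolding \<sigma>_def using that bdd by (intro cSUP_upper) auto
  have "\<exists>F. (finite F \<and> F \<subseteq> I) \<and> \<sigma> - e n < s F" for n
    using less_cSUP_iff[OF ne bdd, of "\<sigma> - e n"] e[of n] by (auto simp: \<sigma>_def)
  then obtain Fn where Fn: "\<And>n. finite (Fn n) \<and> Fn n \<subseteq> I" "\<And>n. \<sigma> - e n < s (Fn n)"
    using choice[of "\<lambda>n F. (finite F \<and> F \<subseteq> I) \<and> \<sigma> - e n < s F"] by blast
  define H where "H n = (\<Union>k\<le>n. Fn k)" for n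
  have H: "finite (H n) \<and> H n \<subseteq> I" for n using Fn(1) by (auto simp: H_def)
  have "H m \<subseteq> H n" if "m \<le> n" for m n unfolding H_def by (rule UN_mono) (use that in auto)
  then have "incseq H" by (rule monoI)
  have "Fn n \<subseteq> H n" for n by (auto simp: H_def)
  then have "\<sigma> - e n < s (H n)" for n using Fn(2)[of n] mono[OF H] by (meson less_le_trans)
  with H \<open>incseq H\<close> upper show thesis by (rule that)
qed

lemma balls_finite_intersection_property:
  fixes c :: "'i \<Rightarrow> 'a::{real_inner,complete_space}"
  assumes fip: "\<And>F. finite F \<Longrightarrow> F \<subseteq> I \<Longrightarrow> \<exists>y. \<forall>i\<in>F. norm (y - c i) \<le> r i"
  shows "\<exists>y. \<forall>i\<in>I. norm (y - c i) \<le> r i"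
proof (cases "I = {}")
  case False
  then obtain i0 where "i0 \<in> I" by blast
  define C where "C F = {y. \<forall>i\<in>F. norm (y - c i) \<le> r i}" for F
  define s where "s F = Inf ((\<lambda>y. (norm y)\<^sup>2) ` C F)" for F
  have C_ne: "C F \<noteq> {}" if "finite F \<and> F \<subseteq> I" for F using fip that by (auto simp: C_def)
  have "C F = (\<Inter>i\<in>F. cball (c i) (r i))" for F by (auto simp: C_def dist_norm norm_minus_commute)
  then have C_convex: "convex (C F)" for F by (simp add: convex_INT)
  have s_le: "s F \<le> (norm y)\<^sup>2" if "y \<in> C F" for F y
    unfolding s_def using that by (intro cInf_lower bdd_belowI2[of _ 0]) auto
  have s_mono: "s F \<le> s G" if "finite G \<and> G \<subseteq> I" "F \<subseteq> G" for F G
  proof -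
    have "C G \<subseteq> C F" using that(2) by (auto simp: C_def)
    then show ?thesis unfolding s_def using C_ne[OF that(1)]
      by (intro cInf_superset_mono) (auto intro: bdd_belowI2[of _ 0])
  qed
  define B where "B = (norm (c i0) + r i0)\<^sup>2"
  have "s F \<le> B" if "finite F \<and> F \<subseteq> I" for F
  proof -
    have F': "finite (insert i0 F) \<and> insert i0 F \<subseteq> I" using that \<open>i0 \<in> I\<close> by simp
    then obtain y where y: "y \<in> C (insert i0 F)" using C_ne by blast
    then have "norm y \<le> norm (c i0) + r i0" using norm_triangle_ineq2[of y "c i0"] by (simp add: C_def)
    then have "(norm y)\<^sup>2 \<le> B" unfolding B_def by (intro power_mono) auto
    then show ?thesis using s_mono[OF F' subset_insertI] s_le[OF y] by simp
  qed
  then have bdd: "bdd_above (s ` {F. finite F \<and> F \<subseteq> I})" by (intro bdd_aboveI2[where M = B]) simp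
  define e where "e n = inverse (real (Suc n))" for n
  have e_pos: "e n > 0" for n by (simp add: e_def)
  obtain H \<sigma> where H_fin: "\<And>n. finite (H n) \<and> H n \<subseteq> I" and "incseq H"
    and s_\<sigma>: "\<And>F. finite F \<and> F \<subseteq> I \<Longrightarrow> s F \<le> \<sigma>" and H_\<sigma>: "\<And>n. \<sigma> - e n < s (H n)"
    by (rule sup_approximated_along_chain[where s = s and e = e, OF s_mono bdd e_pos]) (assumption | rule that)+
  have "C (H n) \<subseteq> C (H m)" if "m \<le> n" for m n using monoD[OF \<open>incseq H\<close> that] by (auto simp: C_def)
  then have dec: "decseq (\<lambda>n. C (H n))" by (simp add: decseq_def)
  have lower: "\<sigma> - e n \<le> (norm z)\<^sup>2" if "z \<in> C (H n)" for n z
    using H_\<sigma>[of n] s_le[OF that] by linarith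
  have e_dec: "decseq e" by (auto simp: decseq_def e_def le_imp_inverse_le)
  have e_null: "e \<longlonglongrightarrow> 0" unfolding e_def by (rule LIMSEQ_inverse_real_of_nat)
  have pick: "\<forall>n. \<exists>y. y \<in> C (G n) \<and> (norm y)\<^sup>2 \<le> \<sigma> + e n" if G: "\<And>n. finite (G n) \<and> G n \<subseteq> I" for G
  proof
    fix n
    have "s (G n) < s (G n) + e n" using e_pos[of n] by simp
    then obtain y where "y \<in> C (G n)" "(norm y)\<^sup>2 < s (G n) + e n"
      using cInf_lessD[of "(\<lambda>y. (norm y)\<^sup>2) ` C (G n)"] C_ne[OF G] unfolding s_def by blast
    then show "\<exists>y. y \<in> C (G n) \<and> (norm y)\<^sup>2 \<le> \<sigma> + e n" using s_\<sigma>[OF G[of n]] by force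
  qed
  obtain y where y: "\<And>n. y n \<in> C (H n)" "\<And>n. (norm (y n))\<^sup>2 \<le> \<sigma> + e n"
    using choice[OF pick[where G = H, OF H_fin]] by blast
  obtain yl where lim: "\<And>z. (\<And>n. z n \<in> C (H n)) \<Longrightarrow> (\<And>n. (norm (z n))\<^sup>2 \<le> \<sigma> + e n) \<Longrightarrow> z \<longlonglongrightarrow> yl"
    using near_minimal_norm_sequences_converge[where C = "\<lambda>n. C (H n)", OF C_convex dec lower e_dec e_null y]
    by blast
  have "norm (yl - c i) \<le> r i" if "i \<in> I" for i
  proof -
    have "finite (insert i (H n)) \<and> insert i (H n) \<subseteq> I" for n using H_fin that by simp
    then obtain z where z: "\<And>n. z n \<in> C (insert i (H n))" "\<And>n. (norm (z n))\<^sup>2 \<le> \<sigma> + e n"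
      using choice[OF pick[where G = "\<lambda>n. insert i (H n)"]] by blast
    then have "z \<longlonglongrightarrow> yl" by (intro lim) (auto simp: C_def)
    moreover have "norm (z n - c i) \<le> r i" for n using z(1)[of n] by (simp add: C_def)
    ultimately show ?thesis by (intro LIMSEQ_le_const2[OF tendsto_norm[OF tendsto_diff[OF _ tendsto_const]]]) auto
  qed
  then show ?thesis by blast
qed simp

lemma maximal_monotone_memI:
  assumes mm: "maximal_monotone T" and related: "\<And>u v. v \<in> T u \<Longrightarrow> inner (b - v) (a - u) \<ge> 0"
  shows "b \<in> T a"
proof -
  define S where "S z = (if z = a then insert b (T a) else T z)" for z
  have gph_S: "gph S = insert (a, b) (gph T)" by (auto simp: S_def gph_def split: if_splits)
  have related': "inner (v - b) (u - a) \<ge> 0" if "v \<in> T u" for u v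
    using related[OF that] by (simp add: inner_diff_left inner_diff_right)
  have "monotone_sv T" using mm by (simp add: maximal_monotone_def)
  then have "monotone_sv S"
    unfolding monotone_sv_def gph_S using related related' by (auto simp: monotone_sv_def gph_def)
  moreover have "gph T \<subseteq> gph S" by (auto simp: gph_S)
  ultimately have "gph T = gph S" using mm by (simp add: maximal_monotone_def)
  then have "(a, b) \<in> gph T" unfolding gph_S by blast
  then show ?thesis by (simp add: gph_def)
qed

lemma monotone_cayley_nonexpansive:
  assumes "monotone_sv T" "v1 \<in> T u1" "v2 \<in> T u2"
  shows "norm ((u1 - v1) - (u2 - v2)) \<le> norm ((u1 + v1) - (u2 + v2))"
proof -
  have "inner (u1 - u2) (v1 - v2) \<ge> 0" using assms by (auto simp: monotone_sv_def gph_def inner_commute)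
  then have "(norm ((u1 - u2) - (v1 - v2)))\<^sup>2 \<le> (norm ((u1 - u2) + (v1 - v2)))\<^sup>2"
    by (simp add: power2_norm_eq_inner inner_add_left inner_add_right inner_diff_left inner_diff_right
        inner_commute)
  then show ?thesis by (simp add: algebra_simps)
qed

lemma minty_surjectivity:
  fixes T :: "'a::{real_inner,complete_space} \<Rightarrow> 'a set"
  assumes mm: "maximal_monotone T"
  obtains u v where "v \<in> T u" "u + v = x0"
proof -
  have mono: "monotone_sv T" using mm by (simp add: maximal_monotone_def)
  define c where "c p = fst p - snd p" for p :: "'a \<times> 'a"
  define x where "x p = fst p + snd p" for p :: "'a \<times> 'a"
  have lip: "norm (c p - c q) \<le> norm (x p - x q)" if "p \<in> gph T" "q \<in> gph T" for p q
    using that monotone_cayley_nonexpansive[OF mono] by (auto simp: gph_def c_def x_def)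
  have "\<exists>y. \<forall>p\<in>gph T. norm (y - c p) \<le> norm (x p - x0)"
  proof (rule balls_finite_intersection_property)
    fix F assume F: "finite F" "F \<subseteq> gph T"
    show "\<exists>y. \<forall>p\<in>F. norm (y - c p) \<le> norm (x p - x0)"
      by (rule kirszbraun_finite[OF F(1)]) (use lip F(2) in blast)
  qed
  then obtain y where y: "\<And>p. p \<in> gph T \<Longrightarrow> norm (y - c p) \<le> norm (x p - x0)" by blast
  define a where "a = (1/2) *\<^sub>R (x0 + y)"
  define b where "b = (1/2) *\<^sub>R (x0 - y)"
  have "inner (b - v) (a - u) \<ge> 0" if "v \<in> T u" for u v
  proof -
    define P where "P = x0 - (u + v)"
    define Q where "Q = y - (u - v)"
    have "norm Q \<le> norm P"
      using y[of "(u, v)"] that by (simp add: gph_def c_def x_def P_def Q_def norm_minus_commute)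
    then have "(norm Q)\<^sup>2 \<le> (norm P)\<^sup>2" by (simp add: power_mono)
    moreover have "inner (P - Q) (P + Q) = (norm P)\<^sup>2 - (norm Q)\<^sup>2"
      by (simp add: power2_norm_eq_inner algebra_simps inner_commute)
    ultimately have "0 \<le> inner (P - Q) (P + Q)" by simp
    moreover have "b - v = (1/2) *\<^sub>R (P - Q)" "a - u = (1/2) *\<^sub>R (P + Q)"
      by (simp_all add: a_def b_def P_def Q_def algebra_simps scaleR_add_left[symmetric])
    ultimately show ?thesis by simp
  qed
  then have "b \<in> T a" by (rule maximal_monotone_memI[OF mm])
  moreover have "a + b = x0" by (simp add: a_def b_def algebra_simps scaleR_add_left[symmetric])
  ultimately show thesis by (rule that)
qed

lemma inner_nonneg_norm_le_norm_add:
  fixes a b :: "'a::real_inner"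
  assumes "inner a b \<ge> 0"
  shows "norm (a, b) \<le> norm (a + b)" "norm (a - b) \<le> norm (a + b)"
proof -
  have sums: "(norm (a + b))\<^sup>2 = (norm a)\<^sup>2 + 2 * inner a b + (norm b)\<^sup>2"
    "(norm (a - b))\<^sup>2 = (norm a)\<^sup>2 - 2 * inner a b + (norm b)\<^sup>2"
    by (simp_all add: power2_norm_eq_inner algebra_simps inner_commute)
  have "(norm (a, b))\<^sup>2 \<le> (norm (a + b))\<^sup>2" using assms sums(1) by (simp add: norm_Pair)
  then show "norm (a, b) \<le> norm (a + b)" by (rule power2_le_imp_le) simp
  have "(norm (a - b))\<^sup>2 \<le> (norm (a + b))\<^sup>2" using assms sums by simp
  then show "norm (a - b) \<le> norm (a + b)" by (rule power2_le_imp_le) simp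
qed

text \<open>Minty's theorem supplies graph points (u', v') with u' + v' = u + v + t(z - w); along
  them the regular-normal inequality conflicts with monotonicity when inner z w < 0.\<close>

lemma maximal_monotone_coderivative_nonneg:
  fixes T :: "'a::{real_inner,complete_space} \<Rightarrow> 'a set"
  assumes mm: "maximal_monotone T" and uv: "(u, v) \<in> gph T"
    and z: "z \<in> regular_coderivative T (u, v) w"
  shows "inner z w \<ge> 0"
proof (rule ccontr)
  assume "\<not> ?thesis"
  then have neg: "inner z w < 0" by simp
  define h where "h = z - w"
  have "(norm h)\<^sup>2 - (norm (z + w))\<^sup>2 = - 4 * inner z w"
    using norm_add_square[of z w] norm_add_square[of z "- w"] by (simp add: h_def)
  then have "(norm (z + w))\<^sup>2 < (norm h)\<^sup>2" using neg by linarith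
  then have less: "norm (z + w) < norm h" by (rule power2_less_imp_less) simp
  define \<gamma> where "\<gamma> = norm h - norm (z + w)"
  have \<gamma>: "\<gamma> > 0" using less by (simp add: \<gamma>_def)
  have nh: "norm h > 0" using less norm_ge_zero[of "z + w"] by linarith
  have "(z, - w) \<in> regular_normal_cone (u, v) (gph T)" using z by (simp add: regular_coderivative_def)
  then obtain \<delta> where \<delta>: "\<delta> > 0" and normal: "\<And>p. p \<in> gph T \<Longrightarrow> dist p (u, v) < \<delta> \<Longrightarrow>
      inner (z, - w) (p - (u, v)) \<le> \<gamma> / 4 * norm (p - (u, v))"
    using regular_normal_coneD[of "(z, - w)" "(u, v)" "gph T" "\<gamma> / 4"] \<gamma> by auto
  define t where "t = \<delta> / (2 * norm h)"
  have t: "t > 0" "t * norm h < \<delta>" using \<delta> nh by (simp_all add: t_def)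
  obtain u' v' where uv': "v' \<in> T u'" and sum: "u' + v' = (u + v) + t *\<^sub>R h"
    using minty_surjectivity[OF mm] by blast
  define du where "du = u' - u"
  define dv where "dv = v' - v"
  have d_sum: "du + dv = t *\<^sub>R h" using sum by (simp add: du_def dv_def algebra_simps)
  have "inner du dv \<ge> 0"
    using mm uv uv' by (auto simp: maximal_monotone_def monotone_sv_def gph_def du_def dv_def inner_commute)
  then have bounds: "norm (du, dv) \<le> t * norm h" "norm (du - dv) \<le> t * norm h"
    using inner_nonneg_norm_le_norm_add[of du dv] t(1) by (simp_all add: d_sum)
  have "inner z du - inner w dv \<le> \<gamma> / 4 * norm (du, dv)"
    using normal[of "(u', v')"] uv' bounds(1) t(2) by (simp add: gph_def dist_norm du_def dv_def)
  also have "\<dots> \<le> \<gamma> / 4 * (t * norm h)" using bounds(1) \<gamma> by (intro mult_left_mono) auto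
  finally have upper: "inner z du - inner w dv \<le> \<gamma> / 4 * (t * norm h)" .
  have "2 * (inner z du - inner w dv) = inner h (du + dv) + inner (z + w) (du - dv)"
    by (simp add: h_def algebra_simps inner_commute)
  moreover have "inner h (du + dv) = t * (norm h)\<^sup>2" by (simp add: d_sum power2_norm_eq_inner)
  moreover have "- (norm (z + w) * (t * norm h)) \<le> inner (z + w) (du - dv)"
    using Cauchy_Schwarz_ineq2[of "z + w" "du - dv"] mult_left_mono[OF bounds(2), of "norm (z + w)"]
    by (simp add: abs_le_iff)
  moreover have "\<gamma> * (t * norm h) = t * (norm h)\<^sup>2 - norm (z + w) * (t * norm h)"
    by (simp add: \<gamma>_def power2_eq_square algebra_simps)
  ultimately have "\<gamma> * (t * norm h) \<le> 2 * (inner z du - inner w dv)" by linarith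
  with upper have "\<gamma> * (t * norm h) \<le> 0" by simp
  then show False using \<gamma> t nh by (simp add: mult_le_0_iff)
qed

lemma norm_le_shift_if_hypomonotone:
  fixes u1 u2 v1 v2 :: "'a::real_inner"
  assumes hypo: "inner (v1 - v2) (u1 - u2) \<ge> - r * (norm (u1 - u2))\<^sup>2" and lam: "r + 1 \<le> lam"
  shows "norm (u1 - u2) \<le> norm ((v1 + lam *\<^sub>R u1) - (v2 + lam *\<^sub>R u2))"
proof -
  define X where "X = (v1 + lam *\<^sub>R u1) - (v2 + lam *\<^sub>R u2)"
  have "inner X (u1 - u2) = inner (v1 - v2) (u1 - u2) + lam * (norm (u1 - u2))\<^sup>2"
    by (simp add: X_def algebra_simps power2_norm_eq_inner)
  then have "(norm (u1 - u2))\<^sup>2 \<le> inner X (u1 - u2)"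
    using hypo lam mult_right_mono[OF lam zero_le_power2[of "norm (u1 - u2)"]] by (simp add: algebra_simps)
  also have "\<dots> \<le> norm X * norm (u1 - u2)" by (rule norm_cauchy_schwarz)
  finally show ?thesis by (cases "u1 = u2") (simp_all add: X_def power2_eq_square)
qed

lemma closed_shifted_range:
  fixes T :: "'a::{real_inner,complete_space} \<Rightarrow> 'a set"
  assumes closed: "closed (gph T)"
    and expansive: "\<And>u1 v1 u2 v2. v1 \<in> T u1 \<Longrightarrow> v2 \<in> T u2 \<Longrightarrow>
      norm (u1 - u2) \<le> norm ((v1 + lam *\<^sub>R u1) - (v2 + lam *\<^sub>R u2))"
  shows "closed {v + lam *\<^sub>R u | u v. v \<in> T u}"
  unfolding closed_sequential_limits
proof (intro allI impI)
  fix x l assume H: "(\<forall>n. x n \<in> {v + lam *\<^sub>R u | u v. v \<in> T u}) \<and> x \<longlonglongrightarrow> l"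
  then have lim: "x \<longlonglongrightarrow> l" by simp
  have ex: "\<forall>n. \<exists>uv. snd uv \<in> T (fst uv) \<and> x n = snd uv + lam *\<^sub>R fst uv"
  proof
    fix n
    obtain u v where "x n = v + lam *\<^sub>R u" "v \<in> T u" using H by blast
    then show "\<exists>uv. snd uv \<in> T (fst uv) \<and> x n = snd uv + lam *\<^sub>R fst uv" by (intro exI[of _ "(u, v)"]) simp
  qed
  obtain W where W: "\<And>n. snd (W n) \<in> T (fst (W n)) \<and> x n = snd (W n) + lam *\<^sub>R fst (W n)"
    using choice[OF ex] by blast
  define U where "U n = fst (W n)" for n
  define V where "V n = snd (W n)" for n
  have UV: "V n \<in> T (U n)" "x n = V n + lam *\<^sub>R U n" for n using W[of n] by (simp_all add: U_def V_def)
  have "Cauchy U"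
  proof (rule metric_CauchyI)
    fix e :: real assume "e > 0"
    then obtain M where M: "\<And>m n. m \<ge> M \<Longrightarrow> n \<ge> M \<Longrightarrow> dist (x m) (x n) < e"
      using metric_CauchyD[OF LIMSEQ_imp_Cauchy[OF lim]] by blast
    have "dist (U m) (U n) < e" if "m \<ge> M" "n \<ge> M" for m n
      using expansive[OF UV(1) UV(1), of m n] M[OF that] by (simp add: dist_norm UV(2))
    then show "\<exists>M. \<forall>m\<ge>M. \<forall>n\<ge>M. dist (U m) (U n) < e" by blast
  qed
  then obtain ul where ul: "U \<longlonglongrightarrow> ul" using Cauchy_convergent_iff convergent_def by blast
  have "V = (\<lambda>n. x n - lam *\<^sub>R U n)" using UV(2) by (simp add: fun_eq_iff)
  then have "V \<longlonglongrightarrow> l - lam *\<^sub>R ul" by (simp only:) (intro tendsto_intros lim ul)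
  then have "(\<lambda>n. (U n, V n)) \<longlonglongrightarrow> (ul, l - lam *\<^sub>R ul)" using ul by (intro tendsto_Pair)
  moreover have "(U n, V n) \<in> gph T" for n using UV(1) by (simp add: gph_def)
  ultimately have "(ul, l - lam *\<^sub>R ul) \<in> gph T" by (rule closed_sequentially[OF closed, rotated])
  then have "l - lam *\<^sub>R ul \<in> T ul" by (simp add: gph_def)
  then show "l \<in> {v + lam *\<^sub>R u | u v. v \<in> T u}" by force
qed

lemma regular_normal_cone_graphI:
  fixes T :: "'a::real_inner \<Rightarrow> 'a set"
  assumes lam: "lam \<ge> 0" and C: "C \<ge> 0"
    and bound: "\<And>u v. v \<in> T u \<Longrightarrow>
      inner q ((u, v) - (ub, vb)) \<le> C * (norm ((v + lam *\<^sub>R u) - (vb + lam *\<^sub>R ub)))\<^sup>2"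
  shows "q \<in> regular_normal_cone (ub, vb) (gph T)"
proof (rule regular_normal_coneI_quadratic[where C = "C * (1 + lam)\<^sup>2"])
  fix p assume "p \<in> gph T"
  then obtain u v where p: "p = (u, v)" "v \<in> T u" by (auto simp: gph_def)
  have eq: "(v + lam *\<^sub>R u) - (vb + lam *\<^sub>R ub) = (v - vb) + lam *\<^sub>R (u - ub)"
    by (simp add: algebra_simps)
  have "norm ((v + lam *\<^sub>R u) - (vb + lam *\<^sub>R ub)) \<le> norm (v - vb) + norm (lam *\<^sub>R (u - ub))"
    unfolding eq by (rule norm_triangle_ineq)
  also have "\<dots> = norm (v - vb) + lam * norm (u - ub)" using lam by simp
  also have "\<dots> \<le> (1 + lam) * norm (p - (ub, vb))"
  proof -
    have "norm (u - ub) \<le> norm (p - (ub, vb))" "norm (v - vb) \<le> norm (p - (ub, vb))"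
      using norm_fst_le[of "u - ub" "v - vb"] norm_snd_le[of "v - vb" "u - ub"] by (simp_all add: p)
    then show ?thesis using lam by (simp add: distrib_right mult_left_mono add_mono)
  qed
  finally have "(norm ((v + lam *\<^sub>R u) - (vb + lam *\<^sub>R ub)))\<^sup>2 \<le> ((1 + lam) * norm (p - (ub, vb)))\<^sup>2"
    by (rule power_mono) simp
  then have "C * (norm ((v + lam *\<^sub>R u) - (vb + lam *\<^sub>R ub)))\<^sup>2 \<le> C * (1 + lam)\<^sup>2 * (norm (p - (ub, vb)))\<^sup>2"
    using C by (simp add: mult_left_mono power_mult_distrib mult.assoc)
  then show "inner q (p - (ub, vb)) \<le> C * (1 + lam)\<^sup>2 * (norm (p - (ub, vb)))\<^sup>2"
    using bound[OF p(2)] by (simp add: p)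
qed

text \<open>The smooth variational principle applied to the squared distance from an outside point
  produces a point of D with a nonzero proximal normal.\<close>

lemma exists_proximal_normal:
  fixes D :: "'a::{real_inner,complete_space} set"
  assumes closed: "closed D" and "D \<noteq> {}" and "x0 \<notin> D"
  obtains y n K where "y \<in> D" "n \<noteq> 0" "K \<ge> 0" "\<And>z. z \<in> D \<Longrightarrow> inner n (z - y) \<le> K * (norm (z - y))\<^sup>2"
proof -
  obtain \<rho> where \<rho>: "\<rho> > 0" and ball: "ball x0 \<rho> \<subseteq> - D"
    using closed \<open>x0 \<notin> D\<close> open_contains_ball[of "- D"] by auto
  have far: "\<rho> \<le> norm (y - x0)" if "y \<in> D" for y
    using ball that by (force simp: dist_norm norm_minus_commute not_le)
  obtain y1 where "y1 \<in> D" using \<open>D \<noteq> {}\<close> by blast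
  define f where "f y = (norm (y - x0))\<^sup>2" for y
  have bdd: "bdd_below (f ` D)" by (intro bdd_belowI2[where m = 0]) (simp add: f_def)
  obtain y0 where y0: "y0 \<in> D" "\<And>w. w \<in> D \<Longrightarrow> f y0 \<le> f w + 1"
    using near_minimizer_exists[OF \<open>y1 \<in> D\<close> bdd, of 1] by auto
  have "continuous_on D f" unfolding f_def by (intro continuous_intros)
  moreover have "3 / \<rho> > 0" using \<rho> by simp
  ultimately obtain y G where yD: "y \<in> D" and G: "G \<in> proximal_subgradient f D y" and "norm G \<le> 3 * 1 / (3 / \<rho>)"
    using smooth_variational_principle[OF closed _ bdd y0 zero_less_one] by blast
  then have norm_G: "norm G \<le> \<rho>" using \<rho> by simp
  obtain K where "K \<ge> 0" and K: "\<And>z. z \<in> D \<Longrightarrow> f y + inner G (z - y) \<le> f z + K * (norm (z - y))\<^sup>2"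
    using G by (auto simp: proximal_subgradient_def)
  define n where "n = 2 *\<^sub>R (x0 - y) + G"
  have "2 * \<rho> \<le> norm (2 *\<^sub>R (x0 - y))" using far[OF yD] by (simp add: norm_minus_commute)
  also have "\<dots> \<le> norm n + norm G" using norm_triangle_ineq4[of n G] by (simp add: n_def)
  finally have "n \<noteq> 0" using norm_G \<rho> by auto
  moreover have "inner n (z - y) \<le> (1 + K) * (norm (z - y))\<^sup>2" if "z \<in> D" for z
  proof -
    have "f z = f y + 2 * inner (z - y) (y - x0) + (norm (z - y))\<^sup>2"
      using norm_add_square[of "z - y" "y - x0"] by (simp add: f_def)
    then show ?thesis using K[OF that]
      by (simp add: n_def inner_commute algebra_simps)
  qed
  moreover have "1 + K \<ge> 0" using \<open>K \<ge> 0\<close> by simp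
  ultimately show thesis using yD that by blast
qed

lemma coderivative_condition_imp_shifted_range_UNIV:
  fixes T :: "'a::{real_inner,complete_space} \<Rightarrow> 'a set"
  assumes proper: "proper_sv T" and closed: "closed {v + lam *\<^sub>R u | u v. v \<in> T u}" and lam: "lam > 0"
    and cod: "\<And>u v w z. (u, v) \<in> gph T \<Longrightarrow> z \<in> regular_coderivative T (u, v) w \<Longrightarrow> inner z w \<ge> 0"
  shows "\<exists>u. x0 - lam *\<^sub>R u \<in> T u"
proof (rule ccontr)
  define D where "D = {v + lam *\<^sub>R u | u v. v \<in> T u}"
  assume none: "\<nexists>u. x0 - lam *\<^sub>R u \<in> T u"
  have out: "x0 \<notin> D"
  proof
    assume "x0 \<in> D"
    then obtain u v where "v \<in> T u" "x0 = v + lam *\<^sub>R u" by (auto simp: D_def)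
    then have "x0 - lam *\<^sub>R u \<in> T u" by simp
    then show False using none by blast
  qed
  have ne: "D \<noteq> {}" using proper by (auto simp: proper_sv_def dom_sv_def D_def)
  obtain y n K where "y \<in> D" "n \<noteq> 0" "K \<ge> 0"
    and normal: "\<And>z. z \<in> D \<Longrightarrow> inner n (z - y) \<le> K * (norm (z - y))\<^sup>2"
    by (rule exists_proximal_normal[OF closed[folded D_def] ne out]) (rule that)
  then obtain ub vb where vb: "vb \<in> T ub" and y: "y = vb + lam *\<^sub>R ub" by (auto simp: D_def)
  have "(lam *\<^sub>R n, n) \<in> regular_normal_cone (ub, vb) (gph T)"
  proof (rule regular_normal_cone_graphI[where C = K])
    fix u v assume "v \<in> T u"
    then have "v + lam *\<^sub>R u \<in> D" by (auto simp: D_def)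
    moreover have "inner (lam *\<^sub>R n, n) ((u, v) - (ub, vb)) = inner n ((v + lam *\<^sub>R u) - y)"
      by (simp add: y algebra_simps)
    ultimately show "inner (lam *\<^sub>R n, n) ((u, v) - (ub, vb)) \<le> K * (norm ((v + lam *\<^sub>R u) - (vb + lam *\<^sub>R ub)))\<^sup>2"
      using normal by (simp add: y)
  qed (use lam \<open>K \<ge> 0\<close> in auto)
  then have "inner (lam *\<^sub>R n) (- n) \<ge> 0"
    using cod[of ub vb "lam *\<^sub>R n" "- n"] vb by (simp add: regular_coderivative_def gph_def)
  then have "lam * (norm n)\<^sup>2 \<le> 0" by (simp add: power2_norm_eq_inner)
  then show False using lam \<open>n \<noteq> 0\<close> by (simp add: mult_le_0_iff)
qed

lemma resolvent_reflection_subgradient_bound: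
  fixes T :: "'a::real_inner \<Rightarrow> 'a set"
  assumes lam: "lam > 0"
    and J: "\<And>x. x - lam *\<^sub>R J x \<in> T (J x)" "\<And>u v. v \<in> T u \<Longrightarrow> J (v + lam *\<^sub>R u) = u"
    and cod: "\<And>u v w z. (u, v) \<in> gph T \<Longrightarrow> z \<in> regular_coderivative T (u, v) w \<Longrightarrow> inner z w \<ge> 0"
    and \<xi>: "\<xi> \<in> proximal_subgradient (\<lambda>x. inner e ((2 * lam) *\<^sub>R J x - x)) UNIV x"
  shows "norm \<xi> \<le> norm e"
proof -
  define f where "f x = inner e ((2 * lam) *\<^sub>R J x - x)" for x
  obtain K where "K \<ge> 0" and K: "\<And>y. f x + inner \<xi> (y - x) \<le> f y + K * (norm (y - x))\<^sup>2"
    using \<xi> by (auto simp: proximal_subgradient_def f_def)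
  define ub where "ub = J x"
  define vb where "vb = x - lam *\<^sub>R ub"
  have vb: "vb \<in> T ub" and x: "x = vb + lam *\<^sub>R ub" using J(1)[of x] by (simp_all add: ub_def vb_def)
  have f_graph: "f (v + lam *\<^sub>R u) = inner e (lam *\<^sub>R u - v)" if "v \<in> T u" for u v
    using J(2)[OF that] by (simp add: f_def algebra_simps scaleR_add_left[symmetric])
  have "(lam *\<^sub>R (\<xi> - e), \<xi> + e) \<in> regular_normal_cone (ub, vb) (gph T)"
  proof (rule regular_normal_cone_graphI[where C = K])
    fix u v assume uv: "v \<in> T u"
    have "inner (lam *\<^sub>R (\<xi> - e), \<xi> + e) ((u, v) - (ub, vb)) =
        inner \<xi> ((v + lam *\<^sub>R u) - x) - (f (v + lam *\<^sub>R u) - f x)"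
      unfolding f_graph[OF uv] x f_graph[OF vb] by (simp add: algebra_simps)
    also have "\<dots> \<le> K * (norm ((v + lam *\<^sub>R u) - x))\<^sup>2" using K[of "v + lam *\<^sub>R u"] by simp
    finally show "inner (lam *\<^sub>R (\<xi> - e), \<xi> + e) ((u, v) - (ub, vb)) \<le>
        K * (norm ((v + lam *\<^sub>R u) - (vb + lam *\<^sub>R ub)))\<^sup>2" by (simp add: x)
  qed (use lam \<open>K \<ge> 0\<close> in auto)
  then have "lam *\<^sub>R (\<xi> - e) \<in> regular_coderivative T (ub, vb) (- (\<xi> + e))"
    unfolding regular_coderivative_def by (simp only: minus_minus mem_Collect_eq)
  moreover have "(ub, vb) \<in> gph T" using vb by (simp add: gph_def)
  ultimately have "inner (lam *\<^sub>R (\<xi> - e)) (- (\<xi> + e)) \<ge> 0" using cod by blast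
  moreover have "inner (lam *\<^sub>R (\<xi> - e)) (- (\<xi> + e)) = lam * ((norm e)\<^sup>2 - (norm \<xi>)\<^sup>2)"
    using inner_commute[of \<xi> e]
    by (simp add: power2_norm_eq_inner inner_diff_left inner_diff_right right_diff_distrib distrib_left)
  ultimately have "lam * ((norm e)\<^sup>2 - (norm \<xi>)\<^sup>2) \<ge> 0" by argo
  then have "(norm \<xi>)\<^sup>2 \<le> (norm e)\<^sup>2" using lam by (simp add: zero_le_mult_iff)
  then show ?thesis by (rule power2_le_imp_le) simp
qed

lemma resolvent_reflection_nonexpansive:
  fixes T :: "'a::{real_inner,complete_space} \<Rightarrow> 'a set"
  assumes lam: "lam > 0"
    and J: "\<And>x. x - lam *\<^sub>R J x \<in> T (J x)" "\<And>u v. v \<in> T u \<Longrightarrow> J (v + lam *\<^sub>R u) = u"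
      "\<And>x y. norm (J x - J y) \<le> norm (x - y)"
    and cod: "\<And>u v w z. (u, v) \<in> gph T \<Longrightarrow> z \<in> regular_coderivative T (u, v) w \<Longrightarrow> inner z w \<ge> 0"
  defines "R x \<equiv> (2 * lam) *\<^sub>R J x - x"
  shows "norm (R x1 - R x2) \<le> norm (x1 - x2)"
proof (cases "R x1 = R x2")
  case False
  define e where "e = (1 / norm (R x1 - R x2)) *\<^sub>R (R x1 - R x2)"
  have "norm e = 1" using False by (simp add: e_def)
  define f where "f x = inner e (R x)" for x
  have "(2 * lam + 1)-lipschitz_on UNIV f"
  proof (rule lipschitz_onI)
    fix x y :: 'a
    have "dist (f x) (f y) \<le> norm e * norm (R x - R y)"
      using Cauchy_Schwarz_ineq2[of e "R x - R y"] by (simp add: f_def dist_real_def inner_diff_right)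
    also have "\<dots> \<le> 2 * lam * norm (J x - J y) + norm (x - y)"
    proof -
      have "R x - R y = (2 * lam) *\<^sub>R (J x - J y) - (x - y)" by (simp add: R_def algebra_simps)
      then show ?thesis
        using norm_triangle_ineq4[of "(2 * lam) *\<^sub>R (J x - J y)" "x - y"] lam \<open>norm e = 1\<close> by simp
    qed
    also have "\<dots> \<le> (2 * lam + 1) * dist x y"
      using J(3)[of x y] lam by (simp add: dist_norm algebra_simps)
    finally show "dist (f x) (f y) \<le> (2 * lam + 1) * dist x y" .
  qed (use lam in simp)
  moreover have "norm \<xi> \<le> 1" if \<xi>: "\<xi> \<in> proximal_subgradient f UNIV x" for x \<xi>
  proof -
    have "norm \<xi> \<le> norm e"
    proof (rule resolvent_reflection_subgradient_bound[where T = T and J = J])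
      show "\<xi> \<in> proximal_subgradient (\<lambda>x. inner e ((2 * lam) *\<^sub>R J x - x)) UNIV x"
        using \<xi> unfolding f_def[abs_def] R_def .
    qed (use lam J cod in auto)
    then show ?thesis using \<open>norm e = 1\<close> by simp
  qed
  ultimately have "f x1 - f x2 \<le> norm (x2 - x1)" by (rule proximal_mean_value_inequality)
  moreover have "f x1 - f x2 = norm (R x1 - R x2)"
  proof -
    have "f x1 - f x2 = inner (R x1 - R x2) (R x1 - R x2) / norm (R x1 - R x2)"
      by (simp add: f_def e_def inner_diff_right diff_divide_distrib)
    also have "\<dots> = norm (R x1 - R x2)"
      using False by (simp add: power2_norm_eq_inner[symmetric] power2_eq_square)
    finally show ?thesis .
  qed
  ultimately show ?thesis by (simp add: norm_minus_commute)
qed simp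

lemma resolvent_monotone:
  fixes T :: "'a::{real_inner,complete_space} \<Rightarrow> 'a set"
  assumes lam: "lam > 0"
    and J: "\<And>x. x - lam *\<^sub>R J x \<in> T (J x)" "\<And>u v. v \<in> T u \<Longrightarrow> J (v + lam *\<^sub>R u) = u"
      "\<And>x y. norm (J x - J y) \<le> norm (x - y)"
    and cod: "\<And>u v w z. (u, v) \<in> gph T \<Longrightarrow> z \<in> regular_coderivative T (u, v) w \<Longrightarrow> inner z w \<ge> 0"
  shows "monotone_sv T"
proof -
  define R where "R x = (2 * lam) *\<^sub>R J x - x" for x
  have R_nonexpansive: "norm (R x1 - R x2) \<le> norm (x1 - x2)" for x1 x2
    unfolding R_def by (rule resolvent_reflection_nonexpansive[OF lam]) (fact J cod)+
  have R_graph: "R (v + lam *\<^sub>R u) = lam *\<^sub>R u - v" if "v \<in> T u" for u v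
  proof -
    have "R (v + lam *\<^sub>R u) = (2 * lam) *\<^sub>R u - (v + lam *\<^sub>R u)" using J(2)[OF that] by (simp add: R_def)
    also have "(2 * lam) *\<^sub>R u = lam *\<^sub>R u + lam *\<^sub>R u" by (simp add: scaleR_add_left[symmetric])
    finally show ?thesis by simp
  qed
  show ?thesis
    unfolding monotone_sv_def gph_def
  proof (clarify)
    fix u1 v1 u2 v2 assume uv: "v1 \<in> T u1" "v2 \<in> T u2"
    define x1 where "x1 = v1 + lam *\<^sub>R u1"
    define x2 where "x2 = v2 + lam *\<^sub>R u2"
    define A where "A = lam *\<^sub>R (u1 - u2)"
    define B where "B = v1 - v2"
    have "R x1 - R x2 = A - B" "x1 - x2 = A + B"
      unfolding x1_def x2_def A_def B_def R_graph[OF uv(1)] R_graph[OF uv(2)] by (simp_all add: algebra_simps)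
    then have "(norm (A - B))\<^sup>2 \<le> (norm (A + B))\<^sup>2" using R_nonexpansive[of x1 x2] by (simp add: power_mono)
    then have "0 \<le> inner A B" using dot_norm[of A B] dot_norm_neg[of A B] by argo
    then have "0 \<le> lam * inner (v1 - v2) (u1 - u2)" by (simp add: A_def B_def inner_commute)
    then show "inner (v1 - v2) (u1 - u2) \<ge> 0" using lam by (simp add: zero_le_mult_iff)
  qed
qed

lemma maximal_monotone_if_shift_surjective:
  assumes mono: "monotone_sv T" and lam: "lam > 0" and surj: "\<And>x. \<exists>u. x - lam *\<^sub>R u \<in> T u"
  shows "maximal_monotone T"
  unfolding maximal_monotone_def
proof (intro conjI mono allI impI)
  fix S assume S: "monotone_sv S \<and> gph T \<subseteq> gph S"
  show "gph T = gph S"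
  proof
    show "gph T \<subseteq> gph S" using S by simp
    show "gph S \<subseteq> gph T"
    proof
      fix p assume "p \<in> gph S"
      then obtain a b where p: "p = (a, b)" "(a, b) \<in> gph S" by (cases p) auto
      obtain u where u: "(b + lam *\<^sub>R a) - lam *\<^sub>R u \<in> T u" using surj by blast
      define v where "v = (b + lam *\<^sub>R a) - lam *\<^sub>R u"
      have "(u, v) \<in> gph S" using S u by (auto simp: gph_def v_def)
      then have "0 \<le> inner (b - v) (a - u)" using S p(2) by (simp add: monotone_sv_def)
      also have "b - v = - (lam *\<^sub>R (a - u))" by (simp add: v_def algebra_simps)
      finally have "lam * (norm (a - u))\<^sup>2 \<le> 0" by (simp add: power2_norm_eq_inner)
      then have "a = u" using lam by (simp add: mult_le_0_iff)
      then show "p \<in> gph T" using u by (simp add: p gph_def)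
    qed
  qed
qed

lemma maximal_monotone_if_hypomonotone_coderivative:
  fixes T :: "'a::{real_inner,complete_space} \<Rightarrow> 'a set"
  assumes proper: "proper_sv T" and closed: "closed (gph T)" and hypo: "hypomonotone T"
    and cod: "\<And>u v w z. (u, v) \<in> gph T \<Longrightarrow> z \<in> regular_coderivative T (u, v) w \<Longrightarrow> inner z w \<ge> 0"
  shows "maximal_monotone T"
proof -
  obtain r where "r > 0" and r: "\<And>u1 v1 u2 v2. v1 \<in> T u1 \<Longrightarrow> v2 \<in> T u2 \<Longrightarrow>
      inner (v1 - v2) (u1 - u2) \<ge> - r * (norm (u1 - u2))\<^sup>2"
    using hypo by (auto simp: hypomonotone_def gph_def)
  define lam where "lam = r + 1"
  have lam: "lam > 0" using \<open>r > 0\<close> by (simp add: lam_def)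
  have expansive: "norm (u1 - u2) \<le> norm ((v1 + lam *\<^sub>R u1) - (v2 + lam *\<^sub>R u2))"
    if "v1 \<in> T u1" "v2 \<in> T u2" for u1 v1 u2 v2
    using norm_le_shift_if_hypomonotone[OF r[OF that]] by (simp add: lam_def)
  have closed_range: "closed {v + lam *\<^sub>R u | u v. v \<in> T u}" using closed expansive by (rule closed_shifted_range)
  have surj: "\<exists>u. x - lam *\<^sub>R u \<in> T u" for x
    by (rule coderivative_condition_imp_shifted_range_UNIV[OF proper closed_range lam]) (fact cod)
  define J where "J x = (SOME u. x - lam *\<^sub>R u \<in> T u)" for x
  have J_T: "x - lam *\<^sub>R J x \<in> T (J x)" for x unfolding J_def by (rule someI_ex[OF surj])
  have J_graph: "J (v + lam *\<^sub>R u) = u" if "v \<in> T u" for u v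
    using expansive[OF J_T[of "v + lam *\<^sub>R u"] that] by simp
  have J_nonexpansive: "norm (J x - J y) \<le> norm (x - y)" for x y
    using expansive[OF J_T[of x] J_T[of y]] by simp
  have "monotone_sv T" by (rule resolvent_monotone[OF lam]) (fact J_T J_graph J_nonexpansive cod)+
  then show ?thesis using lam surj by (rule maximal_monotone_if_shift_surjective)
qed

lemma hypomonotone_if_monotone:
  assumes mono: "monotone_sv T"
  shows "hypomonotone T"
  unfolding hypomonotone_def
proof (intro exI[of _ "1::real"] conjI allI impI)
  fix u1 v1 u2 v2 assume "(u1, v1) \<in> gph T" "(u2, v2) \<in> gph T"
  then have "0 \<le> inner (v1 - v2) (u1 - u2)" using mono by (simp add: monotone_sv_def)
  then show "- 1 * (norm (u1 - u2))\<^sup>2 \<le> inner (v1 - v2) (u1 - u2)"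
    using zero_le_power2[of "norm (u1 - u2)"] by linarith
qed simp

theorem theorem3p2:
  fixes T :: "'a::{real_inner, complete_space} \<Rightarrow> 'a set"
  assumes "proper_sv T"
    and "closed (gph T)"
  shows "maximal_monotone T \<longleftrightarrow>
           (hypomonotone T \<and>
            (\<forall>u v w z. (u, v) \<in> gph T \<longrightarrow> z \<in> regular_coderivative T (u, v) w
                \<longrightarrow> inner z w \<ge> 0))"
proof
  assume mm: "maximal_monotone T"
  then have "hypomonotone T" by (intro hypomonotone_if_monotone) (simp add: maximal_monotone_def)
  with mm show "hypomonotone T \<and> (\<forall>u v w z. (u, v) \<in> gph T \<longrightarrow> z \<in> regular_coderivative T (u, v) w
      \<longrightarrow> inner z w \<ge> 0)"
    using maximal_monotone_coderivative_nonneg by blast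
next
  assume "hypomonotone T \<and> (\<forall>u v w z. (u, v) \<in> gph T \<longrightarrow> z \<in> regular_coderivative T (u, v) w
      \<longrightarrow> inner z w \<ge> 0)"
  then show "maximal_monotone T"
    using maximal_monotone_if_hypomonotone_coderivative[OF assms] by blast
qed

end
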